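(* Let $\mathfrak{F}$ be a hereditary formation of finite groups containing all finite nilpotent groups. If a finite group $G$ is the product of subgroups $G_1,\dots,G_n$ with $\mathfrak{F}$-hypercentral condition for commutators, then $$G/Z_{\mathfrak{F}}(G)\simeq G_1/Z_{\mathfrak{F}}(G_1)\times\cdots\times G_n/Z_{\mathfrak{F}}(G_n).$$
   Context: All groups are finite. A formation is a class of groups closed under homomorphic images and subdirect products (if $G/N_1,G/N_2\in\mathfrak{F}$ then $G/(N_1\cap N_2)\in\mathfrak{F}$); it is hereditary if closed under subgroups. A chief factor $H/K$ of $G$ is $\mathfrak{F}$-central in $G$ if the semidirect product $(H/K)\rtimes(G/C_G(H/K))$ (with the conjugation action) belongs to $\mathfrak{F}$. The $\mathfrak{F}$-hypercenter $Z_{\mathfrak{F}}(G)$ is the largest normal subgroup of $G$ such that every chief factor of $G$ below it is $\mathfrak{F}$-central. $G$ is the product of subgroups $G_1,\dots,G_n$ with $\mathfrak{F}$-hypercentral condition for commutators if $G=G_1\cdots G_n$, $G_iG_j$ is a subgroup of $G$ for all $i,j$, and $[G_i,\prod_{j\ne i}G_j]\le Z_{\mathfrak{F}}(G)$ for every $i\in\{1,\dots,n\}$. *)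

theory Defs
  imports "HOL-Algebra.Algebra"
begin

definition comm_subgroup :: "('a,'b) monoid_scheme \<Rightarrow> 'a set \<Rightarrow> 'a set \<Rightarrow> 'a set" where
  "comm_subgroup G A B =
     generate G {a \<otimes>\<^bsub>G\<^esub> b \<otimes>\<^bsub>G\<^esub> inv\<^bsub>G\<^esub> a \<otimes>\<^bsub>G\<^esub> inv\<^bsub>G\<^esub> b | a b. a \<in> A \<and> b \<in> B}"

primrec lower_central :: "('a,'b) monoid_scheme \<Rightarrow> nat \<Rightarrow> 'a set" where
  "lower_central G 0 = carrier G"
| "lower_central G (Suc k) = comm_subgroup G (lower_central G k) (carrier G)"

definition nilpotent_group :: "('a,'b) monoid_scheme \<Rightarrow> bool" where
  "nilpotent_group G \<longleftrightarrow> group G \<and> (\<exists>k. lower_central G k = {\<one>\<^bsub>G\<^esub>})"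

(* A class of finite groups is represented by a predicate F on groups with carrier
   in nat (every finite group is isomorphic to one of these); a group of arbitrary
   type belongs to the class iff it is isomorphic to a finite group satisfying F. *)
definition in_class :: "(nat monoid \<Rightarrow> bool) \<Rightarrow> ('a,'b) monoid_scheme \<Rightarrow> bool" where
  "in_class F S \<longleftrightarrow> (\<exists>H :: nat monoid. group H \<and> finite (carrier H) \<and> F H \<and> is_iso S H)"

definition formation :: "(nat monoid \<Rightarrow> bool) \<Rightarrow> bool" where
  "formation F \<longleftrightarrow>
     (\<forall>G :: nat monoid. \<forall>N. group G \<and> finite (carrier G) \<and> in_class F G \<and> N \<lhd> G
          \<longrightarrow> in_class F (G Mod N)) \<and>
     (\<forall>G :: nat monoid. \<forall>N1 N2. group G \<and> finite (carrier G) \<and> N1 \<lhd> G \<and> N2 \<lhd> G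
          \<and> in_class F (G Mod N1) \<and> in_class F (G Mod N2)
          \<longrightarrow> in_class F (G Mod (N1 \<inter> N2)))"

definition hereditary_formation :: "(nat monoid \<Rightarrow> bool) \<Rightarrow> bool" where
  "hereditary_formation F \<longleftrightarrow> formation F \<and>
     (\<forall>G :: nat monoid. \<forall>H. group G \<and> finite (carrier G) \<and> in_class F G \<and> subgroup H G
          \<longrightarrow> in_class F (G\<lparr>carrier := H\<rparr>))"

definition contains_nilpotent :: "(nat monoid \<Rightarrow> bool) \<Rightarrow> bool" where
  "contains_nilpotent F \<longleftrightarrow>
     (\<forall>G :: nat monoid. group G \<and> finite (carrier G) \<and> nilpotent_group G \<longrightarrow> in_class F G)"

definition chief_factor :: "('a,'b) monoid_scheme \<Rightarrow> 'a set \<Rightarrow> 'a set \<Rightarrow> bool" where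
  "chief_factor G H K \<longleftrightarrow> H \<lhd> G \<and> K \<lhd> G \<and> K \<subset> H \<and>
     (\<forall>N. N \<lhd> G \<and> K \<subseteq> N \<and> N \<subseteq> H \<longrightarrow> N = K \<or> N = H)"

definition centralizer_factor :: "('a,'b) monoid_scheme \<Rightarrow> 'a set \<Rightarrow> 'a set \<Rightarrow> 'a set" where
  "centralizer_factor G H K =
     {g \<in> carrier G. \<forall>h\<in>H. g \<otimes>\<^bsub>G\<^esub> h \<otimes>\<^bsub>G\<^esub> inv\<^bsub>G\<^esub> g \<otimes>\<^bsub>G\<^esub> inv\<^bsub>G\<^esub> h \<in> K}"

(* The semidirect product (H/K) \<rtimes> (G/C_G(H/K)), the action being conjugation:
   elements are pairs (hK, gC); the coset gC acts on hK by conjugation, and the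
   conjugate of the coset B by the coset X is the set {x b x^-1 | x in X, b in B}
   (which equals g h g^-1 K). *)
definition semidirect_factor :: "('a,'b) monoid_scheme \<Rightarrow> 'a set \<Rightarrow> 'a set \<Rightarrow> ('a set \<times> 'a set) monoid" where
  "semidirect_factor G H K =
    (let C = centralizer_factor G H K in
     \<lparr> carrier = (rcosets\<^bsub>G\<lparr>carrier := H\<rparr>\<^esub> K) \<times> (rcosets\<^bsub>G\<^esub> C),
       monoid.mult = (\<lambda>(A, S) (B, T).
                 (A <#>\<^bsub>G\<^esub> {x \<otimes>\<^bsub>G\<^esub> b \<otimes>\<^bsub>G\<^esub> inv\<^bsub>G\<^esub> x | x b. x \<in> S \<and> b \<in> B},
                  S <#>\<^bsub>G\<^esub> T)),
       one = (K, C) \<rparr>)"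

definition F_central :: "(nat monoid \<Rightarrow> bool) \<Rightarrow> ('a,'b) monoid_scheme \<Rightarrow> 'a set \<Rightarrow> 'a set \<Rightarrow> bool" where
  "F_central F G H K \<longleftrightarrow> in_class F (semidirect_factor G H K)"

definition F_hypercentral :: "(nat monoid \<Rightarrow> bool) \<Rightarrow> ('a,'b) monoid_scheme \<Rightarrow> 'a set \<Rightarrow> bool" where
  "F_hypercentral F G N \<longleftrightarrow> N \<lhd> G \<and>
     (\<forall>H K. chief_factor G H K \<and> H \<subseteq> N \<longrightarrow> F_central F G H K)"

definition F_hypercenter :: "(nat monoid \<Rightarrow> bool) \<Rightarrow> ('a,'b) monoid_scheme \<Rightarrow> 'a set" where
  "F_hypercenter F G = (GREATEST N. F_hypercentral F G N)"

definition set_prod_list :: "('a,'b) monoid_scheme \<Rightarrow> 'a set list \<Rightarrow> 'a set" where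
  "set_prod_list G As = foldr (\<lambda>A P. A <#>\<^bsub>G\<^esub> P) As {\<one>\<^bsub>G\<^esub>}"

end

theory Submission
  imports Defs
begin

text \<open>
  Write \<open>Z = Z\<^sub>F(G)\<close> and \<open>Z\<^sub>i = Z\<^sub>F(G\<^sub>i)\<close>. Everything rests on comparing chief factors of
  different subgroups through one principle: if \<open>A/B\<close> is a chief factor of \<open>H\<close> and \<open>W/Y\<close> one of
  \<open>G\<^sub>0\<close> with \<open>A = (W \<inter> A)B\<close>, \<open>Y \<inter> A \<subseteq> B\<close> and \<open>H = C\<^sub>H(A/B)(G\<^sub>0 \<inter> H)\<close>, then the semidirect
  factor of \<open>A/B\<close> is a homomorphic image of a subgroup of that of \<open>W/Y\<close>, so it lies in the
  hereditary formation \<open>F\<close> whenever the latter does.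

  With it one shows \<open>Z\<^sub>i = G\<^sub>i \<inter> Z\<close>. Chief factors of \<open>G\<^sub>i\<close> below \<open>G\<^sub>i \<inter> Z\<close> refine chief factors
  of \<open>G\<close> below \<open>Z\<close>, giving \<open>G\<^sub>i \<inter> Z \<subseteq> Z\<^sub>i\<close>. Conversely \<open>Z\<^sub>i Z\<close> is normal in \<open>G\<close>, and a chief
  factor \<open>A/B\<close> of \<open>G\<close> between \<open>Z\<close> and \<open>Z\<^sub>i Z\<close> is centralised by every \<open>G\<^sub>j\<close>, \<open>j \<noteq> i\<close>, so
  \<open>G = C\<^sub>G(A/B) G\<^sub>i\<close> and \<open>A/B\<close> is matched by the \<open>F\<close>-central factor \<open>(A \<inter> Z\<^sub>i)/(B \<inter> Z\<^sub>i)\<close> of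
  \<open>G\<^sub>i\<close>; hence \<open>Z\<^sub>i Z \<subseteq> Z\<close>.

  Modulo \<open>Z\<close> the factors commute elementwise, so \<open>(g\<^sub>1Z\<^sub>1, \<dots>, g\<^sub>nZ\<^sub>n) \<mapsto> g\<^sub>1 \<cdots> g\<^sub>n Z\<close> is a
  surjective homomorphism onto \<open>G/Z\<close>. If \<open>g\<^sub>1 \<cdots> g\<^sub>n \<in> Z\<close>, then each \<open>g\<^sub>iZ\<close> is the inverse of
  the product of the others and so is central in \<open>G/Z\<close>; as \<open>F\<close> contains the abelian groups,
  central chief factors are \<open>F\<close>-central and the preimage of the centre of \<open>G/Z\<close> is \<open>Z\<close>. Thus
  \<open>g\<^sub>i \<in> G\<^sub>i \<inter> Z = Z\<^sub>i\<close> and the homomorphism is injective.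
\<close>

section \<open>Normal subgroups of subgroups\<close>

text \<open>Subgroups \<open>H\<close> are kept inside the ambient group: \<open>normal_in G H N\<close> says that \<open>N\<close> is normal
  in \<open>G\<lparr>carrier := H\<rparr>\<close>, but is phrased with the operations of \<open>G\<close>, so that chief factors of
  different subgroups of \<open>G\<close> can be compared directly.\<close>

definition normal_in :: "('a,'b) monoid_scheme \<Rightarrow> 'a set \<Rightarrow> 'a set \<Rightarrow> bool" where
  "normal_in G H N \<longleftrightarrow> subgroup N G \<and> N \<subseteq> H \<and> (\<forall>h\<in>H. \<forall>x\<in>N. h \<otimes>\<^bsub>G\<^esub> x \<otimes>\<^bsub>G\<^esub> inv\<^bsub>G\<^esub> h \<in> N)"

lemma set_mult_mem_iff: "x \<in> A <#>\<^bsub>G\<^esub> B \<longleftrightarrow> (\<exists>a\<in>A. \<exists>b\<in>B. x = a \<otimes>\<^bsub>G\<^esub> b)"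
  unfolding set_mult_def by auto

lemma set_mult_memI: "a \<in> A \<Longrightarrow> b \<in> B \<Longrightarrow> a \<otimes>\<^bsub>G\<^esub> b \<in> A <#>\<^bsub>G\<^esub> B"
  unfolding set_mult_def by blast

lemma r_coset_mem_iff: "x \<in> A #>\<^bsub>G\<^esub> g \<longleftrightarrow> (\<exists>a\<in>A. x = a \<otimes>\<^bsub>G\<^esub> g)"
  unfolding r_coset_def by auto

context group begin

lemma inv_mult_cancel_left [simp]: "x \<in> carrier G \<Longrightarrow> y \<in> carrier G \<Longrightarrow> inv x \<otimes> (x \<otimes> y) = y"
  by (simp add: m_assoc [symmetric])

lemma mult_inv_cancel_left [simp]: "x \<in> carrier G \<Longrightarrow> y \<in> carrier G \<Longrightarrow> x \<otimes> (inv x \<otimes> y) = y"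
  by (simp add: m_assoc [symmetric])

lemma normal_in_iff:
  assumes "subgroup H G"
  shows "N \<lhd> G\<lparr>carrier := H\<rparr> \<longleftrightarrow> normal_in G H N"
proof -
  interpret H: group "G\<lparr>carrier := H\<rparr>" using subgroup_imp_group[OF assms] .
  have "subgroup N (G\<lparr>carrier := H\<rparr>) \<longleftrightarrow> subgroup N G \<and> N \<subseteq> H"
    using incl_subgroup[OF assms] subgroup_incl[OF _ assms] subgroup.subset by fastforce
  then show ?thesis
    unfolding H.normal_inv_iff normal_in_def using assms by (auto simp: subgroup.mem_carrier)
qed

lemma normal_in_subgroup: "normal_in G H N \<Longrightarrow> subgroup N G"
  by (simp add: normal_in_def)

lemma normal_in_subset: "normal_in G H N \<Longrightarrow> N \<subseteq> H"
  by (simp add: normal_in_def)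

lemma normal_in_conj: "normal_in G H N \<Longrightarrow> h \<in> H \<Longrightarrow> x \<in> N \<Longrightarrow> h \<otimes> x \<otimes> inv h \<in> N"
  by (simp add: normal_in_def)

lemma normal_in_conj_inv:
  assumes "subgroup H G" "normal_in G H N" "h \<in> H" "x \<in> N"
  shows "inv h \<otimes> x \<otimes> h \<in> N"
  using normal_in_conj[OF assms(2) subgroup.m_inv_closed[OF assms(1,3)] assms(4)]
    subgroup.mem_carrier[OF assms(1,3)] by simp

lemma normal_in_mem_carrier: "normal_in G H N \<Longrightarrow> x \<in> N \<Longrightarrow> x \<in> carrier G"
  by (rule subgroup.mem_carrier[OF normal_in_subgroup])

lemma normal_in_one: "normal_in G H N \<Longrightarrow> \<one> \<in> N"
  by (rule subgroup.one_closed[OF normal_in_subgroup])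

lemma normal_in_m_closed: "normal_in G H N \<Longrightarrow> x \<in> N \<Longrightarrow> y \<in> N \<Longrightarrow> x \<otimes> y \<in> N"
  by (rule subgroup.m_closed[OF normal_in_subgroup])

lemma normal_in_inv_closed: "normal_in G H N \<Longrightarrow> x \<in> N \<Longrightarrow> inv x \<in> N"
  by (rule subgroup.m_inv_closed[OF normal_in_subgroup])

lemma normal_in_self: "subgroup H G \<Longrightarrow> normal_in G H H"
  unfolding normal_in_def by (auto intro!: subgroup.m_closed subgroup.m_inv_closed)

lemma normal_in_trivial: "subgroup H G \<Longrightarrow> normal_in G H {\<one>}"
  unfolding normal_in_def using triv_subgroup subgroup.one_closed subgroup.mem_carrier by fastforce

lemma normal_in_Int: "normal_in G H A \<Longrightarrow> normal_in G H B \<Longrightarrow> normal_in G H (A \<inter> B)"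
  unfolding normal_in_def using subgroups_Inter_pair by auto

lemma normal_in_Int_Int:
  assumes "normal_in G H A" "normal_in G K B"
  shows "normal_in G (H \<inter> K) (A \<inter> B)"
  using assms subgroups_Inter_pair[OF normal_in_subgroup[OF assms(1)] normal_in_subgroup[OF assms(2)]]
  unfolding normal_in_def by blast

lemma set_mult_subset_subgroup:
  assumes "subgroup A G" "B \<subseteq> A" "C \<subseteq> A"
  shows "B <#> C \<subseteq> A"
  using assms subgroup.m_closed[OF assms(1)] unfolding set_mult_def by blast

lemma subset_set_mult_left: "A \<subseteq> carrier G \<Longrightarrow> \<one> \<in> N \<Longrightarrow> A \<subseteq> A <#> N"
  unfolding set_mult_def by force

lemma subset_set_mult_right: "\<one> \<in> A \<Longrightarrow> N \<subseteq> carrier G \<Longrightarrow> N \<subseteq> A <#> N"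
  unfolding set_mult_def by force

lemma set_mult_subgroup_absorb:
  assumes "subgroup A G" "B \<subseteq> A" "\<one> \<in> B"
  shows "A <#> B = A"
  using set_mult_subset_subgroup[OF assms(1) subset_refl assms(2)]
    subset_set_mult_left[OF subgroup.subset[OF assms(1)] assms(3)] by blast

lemma subgroup_set_mult_normal_in:
  assumes H: "subgroup H G" and "subgroup A G" "A \<subseteq> H" and B: "normal_in G H B"
  shows "subgroup (A <#> B) G"
proof -
  have nB: "B \<lhd> G\<lparr>carrier := H\<rparr>" using normal_in_iff[OF H] B by simp
  have sA: "subgroup A (G\<lparr>carrier := H\<rparr>)" using subgroup_incl[OF assms(2) H assms(3)] .
  have "A <#> B = B <#> A" using commut_normal_subgroup[OF H nB sA] .
  then show ?thesis using incl_subgroup[OF H mult_norm_sub_in_sub[OF nB sA H]] by simp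
qed

lemma normal_in_set_mult:
  assumes H: "subgroup H G" and A: "normal_in G H A" and B: "normal_in G H B"
  shows "normal_in G H (A <#> B)"
  unfolding normal_in_def
proof (intro conjI ballI)
  show "subgroup (A <#> B) G"
    by (rule subgroup_set_mult_normal_in[OF H normal_in_subgroup[OF A] normal_in_subset[OF A] B])
  show "A <#> B \<subseteq> H"
    by (rule set_mult_subset_subgroup[OF H normal_in_subset[OF A] normal_in_subset[OF B]])
  fix h x assume h: "h \<in> H" and "x \<in> A <#> B"
  then obtain a b where ab: "a \<in> A" "b \<in> B" "x = a \<otimes> b" unfolding set_mult_mem_iff by blast
  have "h \<in> carrier G" "a \<in> carrier G" "b \<in> carrier G"
    using ab subgroup.mem_carrier[OF H h] normal_in_mem_carrier[OF A] normal_in_mem_carrier[OF B] by auto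
  then have "h \<otimes> x \<otimes> inv h = (h \<otimes> a \<otimes> inv h) \<otimes> (h \<otimes> b \<otimes> inv h)"
    using ab(3) by (simp add: m_assoc)
  then show "h \<otimes> x \<otimes> inv h \<in> A <#> B"
    using set_mult_memI normal_in_conj[OF A h ab(1)] normal_in_conj[OF B h ab(2)] by metis
qed

lemma dedekind_law_left:
  assumes A: "subgroup A G" and B: "subgroup B G" and Z: "subgroup Z G" and BA: "B \<subseteq> A"
  shows "A \<inter> (B <#> Z) = B <#> (A \<inter> Z)"
proof
  have "B <#> (A \<inter> Z) \<subseteq> A" using set_mult_subset_subgroup[OF A BA] by blast
  moreover have "B <#> (A \<inter> Z) \<subseteq> B <#> Z" by (rule mono_set_mult) auto
  ultimately show "B <#> (A \<inter> Z) \<subseteq> A \<inter> (B <#> Z)" by blast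
  show "A \<inter> (B <#> Z) \<subseteq> B <#> (A \<inter> Z)"
  proof
    fix x assume x: "x \<in> A \<inter> (B <#> Z)"
    then obtain b z where bz: "b \<in> B" "z \<in> Z" "x = b \<otimes> z"
      unfolding Int_iff set_mult_mem_iff by blast
    have "z = inv b \<otimes> x"
      using bz subgroup.mem_carrier[OF B] subgroup.mem_carrier[OF Z] by simp
    moreover have "inv b \<in> A" using subgroup.m_inv_closed[OF A] bz(1) BA by blast
    ultimately have "z \<in> A" using subgroup.m_closed[OF A] x by simp
    with bz show "x \<in> B <#> (A \<inter> Z)" using set_mult_memI[of b B z "A \<inter> Z"] by simp
  qed
qed

lemma dedekind_law_right:
  assumes M: "subgroup M G" and A: "subgroup A G" and N: "subgroup N G" and NM: "N \<subseteq> M"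
  shows "M \<inter> (A <#> N) = (M \<inter> A) <#> N"
proof
  have "(M \<inter> A) <#> N \<subseteq> M" using set_mult_subset_subgroup[OF M _ NM] by blast
  moreover have "(M \<inter> A) <#> N \<subseteq> A <#> N" by (rule mono_set_mult) auto
  ultimately show "(M \<inter> A) <#> N \<subseteq> M \<inter> (A <#> N)" by blast
  show "M \<inter> (A <#> N) \<subseteq> (M \<inter> A) <#> N"
  proof
    fix x assume x: "x \<in> M \<inter> (A <#> N)"
    then obtain a z where az: "a \<in> A" "z \<in> N" "x = a \<otimes> z"
      unfolding Int_iff set_mult_mem_iff by blast
    have "a = x \<otimes> inv z"
      using az subgroup.mem_carrier[OF A] subgroup.mem_carrier[OF N] by (simp add: m_assoc)
    moreover have "inv z \<in> M" using subgroup.m_inv_closed[OF M] az(2) NM by blast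
    ultimately have "a \<in> M" using subgroup.m_closed[OF M] x by simp
    with az show "x \<in> (M \<inter> A) <#> N" using set_mult_memI[of a "M \<inter> A" z N] by simp
  qed
qed

lemma rcos_eq_iff:
  assumes "subgroup B G" "x \<in> carrier G" "y \<in> carrier G"
  shows "B #> x = B #> y \<longleftrightarrow> x \<otimes> inv y \<in> B"
  using subgroup.rcos_module[OF assms(1) is_group assms(3,2)] rcos_self[OF _ assms(1)]
    repr_independence[OF _ assms(3,1)] assms(2,3) by blast

lemma rcos_mult_normal_in:
  assumes H: "subgroup H G" and "normal_in G H B" "x \<in> H" "y \<in> H"
  shows "(B #> x) <#> (B #> y) = B #> (x \<otimes> y)"
proof -
  have "B \<lhd> G\<lparr>carrier := H\<rparr>" using normal_in_iff[OF H] assms(2) by simp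
  from normal.rcos_sum[OF this, of x y] show ?thesis using assms(3,4) by simp
qed

lemma rcos_mult_absorb:
  assumes "subgroup C G" "c \<in> C" "g \<in> carrier G"
  shows "C #> (c \<otimes> g) = C #> g"
  using coset_mult_assoc[OF subgroup.subset[OF assms(1)] subgroup.mem_carrier[OF assms(1,2)] assms(3)]
    subgroup.rcos_const[OF assms(1) is_group assms(2)] by simp

lemma rcos_Int_subgroup:
  assumes A: "subgroup A G" and "Y \<subseteq> carrier G" "x \<in> A"
  shows "(Y #> x) \<inter> A = (Y \<inter> A) #> x"
proof -
  have "y \<in> A" if "y \<in> Y" "y \<otimes> x \<in> A" for y
  proof -
    have "y = (y \<otimes> x) \<otimes> inv x"
      using that assms subgroup.mem_carrier[OF A] by (simp add: m_assoc subset_iff)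
    then show ?thesis using that(2) assms(3) subgroup.m_closed[OF A] subgroup.m_inv_closed[OF A] by metis
  qed
  then show ?thesis using subgroup.m_closed[OF A _ assms(3)] unfolding r_coset_def by auto
qed

lemma set_mult_rcos_Int_absorb:
  assumes A: "subgroup A G" and B: "subgroup B G" and Y: "Y \<subseteq> carrier G" "\<one> \<in> Y"
    and YA: "Y \<inter> A \<subseteq> B" and x: "x \<in> A"
  shows "B <#> ((Y #> x) \<inter> A) = B #> x"
proof -
  have "B <#> ((Y #> x) \<inter> A) = B <#> ((Y \<inter> A) #> x)" using rcos_Int_subgroup[OF A Y(1) x] by simp
  also have "\<dots> = (B <#> (Y \<inter> A)) #> x"
    using setmult_rcos_assoc[OF subgroup.subset[OF B] _ subgroup.mem_carrier[OF A x], of "Y \<inter> A"] Y(1)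
    by blast
  also have "\<dots> = B #> x"
    using set_mult_subgroup_absorb[OF B YA] Y(2) subgroup.one_closed[OF A] by simp
  finally show ?thesis .
qed

lemma commute_mult:
  assumes "x \<in> carrier G" "y \<in> carrier G" "z \<in> carrier G" "x \<otimes> y = y \<otimes> x" "x \<otimes> z = z \<otimes> x"
  shows "x \<otimes> (y \<otimes> z) = (y \<otimes> z) \<otimes> x"
proof -
  have "x \<otimes> (y \<otimes> z) = (y \<otimes> x) \<otimes> z" using assms(1-4) by (simp add: m_assoc[symmetric])
  also have "\<dots> = y \<otimes> (z \<otimes> x)" using assms(1-3,5) by (simp add: m_assoc)
  finally show ?thesis using assms(1-3) by (simp add: m_assoc)
qed

lemma commute_inv:
  assumes "x \<in> carrier G" "y \<in> carrier G" "x \<otimes> y = y \<otimes> x"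
  shows "x \<otimes> inv y = inv y \<otimes> x"
proof -
  have "inv y \<otimes> (x \<otimes> y) \<otimes> inv y = inv y \<otimes> (y \<otimes> x) \<otimes> inv y" using assms(3) by simp
  then show ?thesis using assms(1,2) by (simp add: m_assoc)
qed

end

lemma (in normal) rcos_commute_iff:
  assumes "x \<in> carrier G" "y \<in> carrier G"
  shows "(H #> x) <#> (H #> y) = (H #> y) <#> (H #> x) \<longleftrightarrow> x \<otimes> y \<otimes> inv x \<otimes> inv y \<in> H"
proof -
  have "(x \<otimes> y) \<otimes> inv (y \<otimes> x) = x \<otimes> y \<otimes> inv x \<otimes> inv y" using assms by (simp add: inv_mult_group m_assoc)
  then show ?thesis using rcos_sum rcos_eq_iff[OF subgroup_axioms] assms by simp
qed

lemma (in group_hom) normal_in_preimage_center: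
  "normal_in G (carrier G) {x \<in> carrier G. \<forall>y\<in>carrier G. h x \<otimes>\<^bsub>H\<^esub> h y = h y \<otimes>\<^bsub>H\<^esub> h x}"
  (is "normal_in G (carrier G) ?T")
  unfolding normal_in_def
proof (intro conjI ballI)
  have commutes: "x \<in> ?T \<Longrightarrow> y \<in> carrier G \<Longrightarrow> h x \<otimes>\<^bsub>H\<^esub> h y = h y \<otimes>\<^bsub>H\<^esub> h x" for x y by blast
  show "subgroup ?T G"
  proof (rule G.subgroupI)
    show "?T \<subseteq> carrier G" by blast
    have "\<one> \<in> ?T" by (simp add: hom_closed)
    then show "?T \<noteq> {}" by blast
  next
    fix x assume x: "x \<in> ?T"
    then have xc: "x \<in> carrier G" by blast
    have "h (inv x) \<otimes>\<^bsub>H\<^esub> h y = h y \<otimes>\<^bsub>H\<^esub> h (inv x)" if y: "y \<in> carrier G" for y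
      using H.commute_inv[OF hom_closed[OF y] hom_closed[OF xc] commutes[OF x y, symmetric]] xc
      by (simp add: hom_inv)
    then show "inv x \<in> ?T" using xc by blast
  next
    fix x y assume x: "x \<in> ?T" and y: "y \<in> ?T"
    then have xc: "x \<in> carrier G" and yc: "y \<in> carrier G" by blast+
    have "h (x \<otimes> y) \<otimes>\<^bsub>H\<^esub> h z = h z \<otimes>\<^bsub>H\<^esub> h (x \<otimes> y)" if z: "z \<in> carrier G" for z
      using H.commute_mult[OF hom_closed[OF z] hom_closed[OF xc] hom_closed[OF yc]
          commutes[OF x z, symmetric] commutes[OF y z, symmetric]] xc yc by simp
    then show "x \<otimes> y \<in> ?T" using xc yc by blast
  qed
  show "?T \<subseteq> carrier G" by blast
  fix g x assume g: "g \<in> carrier G" and x: "x \<in> ?T"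
  then have xc: "x \<in> carrier G" by blast
  have "h (g \<otimes> x \<otimes> inv g) = h g \<otimes>\<^bsub>H\<^esub> h x \<otimes>\<^bsub>H\<^esub> inv\<^bsub>H\<^esub> h g" using g xc by (simp add: hom_inv)
  also have "\<dots> = h x \<otimes>\<^bsub>H\<^esub> h g \<otimes>\<^bsub>H\<^esub> inv\<^bsub>H\<^esub> h g" by (simp only: commutes[OF x g])
  also have "\<dots> = h x" using g xc by (simp add: H.m_assoc)
  finally show "g \<otimes> x \<otimes> inv g \<in> ?T" using g xc x by auto
qed

section \<open>Closure properties of classes of groups\<close>

lemma in_class_iso: "S' \<cong> S \<Longrightarrow> in_class F S \<Longrightarrow> in_class F S'"
  unfolding in_class_def using iso_trans by blast

lemma in_class_self: "group H \<Longrightarrow> finite (carrier H) \<Longrightarrow> F H \<Longrightarrow> in_class F H"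
  unfolding in_class_def using iso_refl by blast

text \<open>Isomorphisms see neither closure nor the unit of their source, so a structure in a class is a
  group only if it is closed under multiplication and its unit is idempotent.\<close>

lemma in_class_imp_group:
  assumes "in_class F S"
    and closed: "\<And>x y. x \<in> carrier S \<Longrightarrow> y \<in> carrier S \<Longrightarrow> x \<otimes>\<^bsub>S\<^esub> y \<in> carrier S"
    and one: "\<one>\<^bsub>S\<^esub> \<in> carrier S" "\<one>\<^bsub>S\<^esub> \<otimes>\<^bsub>S\<^esub> \<one>\<^bsub>S\<^esub> = \<one>\<^bsub>S\<^esub>"
  shows "group S"
proof -
  obtain H :: "nat monoid" and \<phi> where H: "group H" and \<phi>: "\<phi> \<in> iso S H"
    using assms(1) unfolding in_class_def is_iso_def by blast
  define \<psi> where "\<psi> = inv_into (carrier S) \<phi>"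
  have inj: "inj_on \<phi> (carrier S)" and onto: "\<phi> ` carrier S = carrier H"
    using \<phi> by (auto simp: iso_def bij_betw_def)
  have \<psi>_bij: "bij_betw \<psi> (carrier H) (carrier S)"
    unfolding \<psi>_def using \<phi> by (simp add: iso_def bij_betw_inv_into)
  have \<psi>_closed: "\<psi> x \<in> carrier S" if "x \<in> carrier H" for x
    using \<psi>_bij that by (meson bij_betwE)
  have "\<psi> \<in> hom H S"
  proof (rule homI)
    show "\<psi> x \<in> carrier S" if "x \<in> carrier H" for x using \<psi>_closed that .
    show "\<psi> (x \<otimes>\<^bsub>H\<^esub> y) = \<psi> x \<otimes>\<^bsub>S\<^esub> \<psi> y" if "x \<in> carrier H" "y \<in> carrier H" for x y
    proof -
      have "\<phi> (\<psi> x \<otimes>\<^bsub>S\<^esub> \<psi> y) = \<phi> (\<psi> x) \<otimes>\<^bsub>H\<^esub> \<phi> (\<psi> y)"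
        using \<phi> \<psi>_closed that unfolding iso_def hom_def by blast
      also have "\<dots> = x \<otimes>\<^bsub>H\<^esub> y" using onto that unfolding \<psi>_def by (simp add: f_inv_into_f)
      finally show ?thesis
        unfolding \<psi>_def by (rule inv_into_f_eq[OF inj closed[OF \<psi>_closed \<psi>_closed, OF that, unfolded \<psi>_def]])
    qed
  qed
  then have "\<psi> \<in> iso H S" using \<psi>_bij by (simp add: iso_def)
  then have S': "group (S\<lparr>one := \<psi> \<one>\<^bsub>H\<^esub>\<rparr>)" by (rule group.iso_imp_img_group[OF H])
  have "\<psi> \<one>\<^bsub>H\<^esub> = \<one>\<^bsub>S\<^esub>" using group.l_cancel_one[OF S', of "\<one>\<^bsub>S\<^esub>" "\<one>\<^bsub>S\<^esub>"] one by simp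
  with S' show ?thesis by simp
qed

lemma in_class_subgroup:
  assumes her: "hereditary_formation F" and S: "in_class F S" "group S" and U: "subgroup U S"
  shows "in_class F (S\<lparr>carrier := U\<rparr>)"
proof -
  obtain H :: "nat monoid" and \<phi> where H: "group H" "finite (carrier H)" "F H" and \<phi>: "\<phi> \<in> iso S H"
    using S(1) unfolding in_class_def is_iso_def by blast
  have sub: "subgroup (\<phi> ` U) H" by (rule subgroup.iso_subgroup[OF U S(2) H(1) \<phi>])
  have "in_class F (H\<lparr>carrier := \<phi> ` U\<rparr>)"
    using her H sub in_class_self unfolding hereditary_formation_def by blast
  moreover have "S\<lparr>carrier := U\<rparr> \<cong> H\<lparr>carrier := \<phi> ` U\<rparr>"
    using iso_restrict[OF \<phi> S(2) H(1) U] unfolding is_iso_def by blast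
  ultimately show ?thesis by (rule in_class_iso[rotated])
qed

lemma in_class_hom_image:
  assumes form: "formation F" and Q: "in_class F Q" "group Q"
    and \<psi>: "\<psi> \<in> hom Q T" and onto: "\<psi> ` carrier Q = carrier T"
  shows "in_class F T"
proof -
  obtain H :: "nat monoid" where H: "group H" "finite (carrier H)" "F H" and "Q \<cong> H"
    using Q(1) unfolding in_class_def by blast
  then obtain \<phi> where \<phi>: "\<phi> \<in> iso H Q" using group.iso_sym[OF Q(2)] unfolding is_iso_def by blast
  define \<chi> where "\<chi> = \<psi> \<circ> \<phi>"
  define T' where "T' = T\<lparr>one := \<chi> \<one>\<^bsub>H\<^esub>\<rparr>"
  have \<chi>: "\<chi> \<in> hom H T" unfolding \<chi>_def using hom_compose[OF iso_imp_homomorphism[OF \<phi>] \<psi>] .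
  have "\<phi> ` carrier H = carrier Q" using \<phi> by (simp add: iso_def bij_betw_def)
  then have onto': "\<chi> ` carrier H = carrier T" using onto unfolding \<chi>_def image_comp[symmetric] by simp
  have "T\<lparr>carrier := \<chi> ` carrier H, one := \<chi> \<one>\<^bsub>H\<^esub>\<rparr> = T'" unfolding T'_def onto' by simp
  then have "group T'" using group.hom_imp_img_group[OF H(1) \<chi>] by simp
  moreover have "\<chi> \<in> hom H T'" using \<chi> unfolding T'_def hom_def by simp
  ultimately interpret \<chi>: group_hom H T' \<chi>
    using H(1) by (simp add: group_hom_def group_hom_axioms_def)
  have "H Mod kernel H T' \<chi> \<cong> T'" using \<chi>.FactGroup_iso onto' unfolding T'_def by simp
  then have "T' \<cong> H Mod kernel H T' \<chi>"
    using group.iso_sym[OF normal.factorgroup_is_group[OF \<chi>.normal_kernel]] by blast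
  moreover have "T \<cong> T'"
    unfolding T'_def is_iso_def using iso_refl[unfolded is_iso_def, of T] by (simp add: iso_def hom_def)
  moreover have "in_class F (H Mod kernel H T' \<chi>)"
    using form H in_class_self \<chi>.normal_kernel unfolding formation_def by blast
  ultimately show ?thesis using in_class_iso iso_trans by metis
qed

lemma (in comm_group) nilpotent: "nilpotent_group G"
proof -
  have "a \<otimes> b \<otimes> inv a \<otimes> inv b = \<one>" if "a \<in> carrier G" "b \<in> carrier G" for a b
    using that by (simp add: m_assoc m_lcomm[of b "inv a" "inv b"])
  then have "{a \<otimes> b \<otimes> inv a \<otimes> inv b | a b. a \<in> carrier G \<and> b \<in> carrier G} = {\<one>}" by force
  then have "lower_central G 1 = {\<one>}" by (simp add: comm_subgroup_def generate_one)
  then show ?thesis unfolding nilpotent_group_def using is_group by blast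
qed

lemma comm_group_in_class:
  assumes nil: "contains_nilpotent F" and A: "comm_group A" "finite (carrier A)"
  shows "in_class F A"
proof -
  obtain f :: "_ \<Rightarrow> nat" where f: "inj_on f (carrier A)"
    using finite_imp_inj_to_nat_seg[OF A(2)] by blast
  have iso: "f \<in> iso A (image_group f A)" by (rule inj_imp_image_group_iso[OF f])
  have "comm_group (image_group f A)"
    using comm_group.iso_imp_img_comm_group[OF A(1) iso] by (simp add: image_group_def)
  moreover have "finite (carrier (image_group f A))" using A(2) by (simp add: image_group_carrier)
  ultimately have "in_class F (image_group f A)"
    using nil comm_group.nilpotent unfolding contains_nilpotent_def comm_group_def by blast
  then show ?thesis using in_class_iso iso unfolding is_iso_def by blast
qed

section \<open>Chief factors and their semidirect factors\<close>

definition chief_factor_in :: "('a,'b) monoid_scheme \<Rightarrow> 'a set \<Rightarrow> 'a set \<Rightarrow> 'a set \<Rightarrow> bool" where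
  "chief_factor_in G H A B \<longleftrightarrow> normal_in G H A \<and> normal_in G H B \<and> B \<subset> A \<and>
     (\<forall>N. normal_in G H N \<and> B \<subseteq> N \<and> N \<subseteq> A \<longrightarrow> N = B \<or> N = A)"

definition centralizer_in :: "('a,'b) monoid_scheme \<Rightarrow> 'a set \<Rightarrow> 'a set \<Rightarrow> 'a set \<Rightarrow> 'a set" where
  "centralizer_in G H A B = {g \<in> H. \<forall>a\<in>A. g \<otimes>\<^bsub>G\<^esub> a \<otimes>\<^bsub>G\<^esub> inv\<^bsub>G\<^esub> g \<otimes>\<^bsub>G\<^esub> inv\<^bsub>G\<^esub> a \<in> B}"

context group begin

lemma chief_factor_in_iff:
  "subgroup H G \<Longrightarrow> chief_factor (G\<lparr>carrier := H\<rparr>) A B \<longleftrightarrow> chief_factor_in G H A B"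
  by (simp add: chief_factor_def chief_factor_in_def normal_in_iff)

lemma chief_factor_inD:
  assumes "chief_factor_in G H A B"
  shows "normal_in G H A" and "normal_in G H B" and "B \<subseteq> A" and "B \<noteq> A"
  using assms unfolding chief_factor_in_def by auto

lemma chief_factor_in_minimal:
  "chief_factor_in G H A B \<Longrightarrow> normal_in G H N \<Longrightarrow> B \<subseteq> N \<Longrightarrow> N \<subseteq> A \<Longrightarrow> N = B \<or> N = A"
  unfolding chief_factor_in_def by blast

lemma chief_factor_in_nontrivial:
  assumes "chief_factor_in G H A B"
  shows "\<not> A \<subseteq> {\<one>}"
proof
  assume "A \<subseteq> {\<one>}"
  then have "A \<subseteq> B" using normal_in_one[OF chief_factor_inD(2)[OF assms]] by blast
  then show False using chief_factor_inD(3,4)[OF assms] by blast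
qed

lemma chief_factor_in_below:
  assumes fin: "finite (carrier G)" and H: "subgroup H G" and N: "normal_in G H N" "\<not> N \<subseteq> {\<one>}"
  obtains L where "chief_factor_in G H N L"
proof -
  let ?S = "{L. normal_in G H L \<and> L \<subset> N}"
  have "?S \<subseteq> Pow (carrier G)" using normal_in_mem_carrier by blast
  then have "finite ?S" using finite_subset fin by blast
  moreover have "{\<one>} \<in> ?S" using normal_in_trivial[OF H] normal_in_one[OF N(1)] N(2) by blast
  ultimately obtain L where L: "L \<in> ?S" and max: "\<forall>M\<in>?S. L \<subseteq> M \<longrightarrow> L = M"
    using finite_has_maximal[of ?S] by blast
  have "chief_factor_in G H N L" unfolding chief_factor_in_def
  proof (intro conjI allI impI)
    show "normal_in G H N" "normal_in G H L" "L \<subset> N" using N(1) L by auto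
    fix M assume "normal_in G H M \<and> L \<subseteq> M \<and> M \<subseteq> N"
    then show "M = L \<or> M = N" using max by blast
  qed
  then show thesis by (rule that)
qed

lemma centralizer_in_eq:
  assumes "subgroup H G" "A \<subseteq> H"
  shows "centralizer_factor (G\<lparr>carrier := H\<rparr>) A B = centralizer_in G H A B"
proof -
  have "inv\<^bsub>G\<lparr>carrier := H\<rparr>\<^esub> h = inv h" if "h \<in> H" for h using assms(1) that by simp
  then show ?thesis
    unfolding centralizer_factor_def centralizer_in_def using subsetD[OF assms(2)] by auto
qed

lemma mem_centralizer_in_iff:
  "g \<in> centralizer_in G H A B \<longleftrightarrow> g \<in> H \<and> (\<forall>a\<in>A. g \<otimes> a \<otimes> inv g \<otimes> inv a \<in> B)"
  unfolding centralizer_in_def by auto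

lemma subgroup_centralizer_in:
  assumes H: "subgroup H G" and A: "normal_in G H A" and B: "normal_in G H B"
  shows "subgroup (centralizer_in G H A B) G"
proof (rule subgroupI)
  let ?C = "centralizer_in G H A B"
  have cH: "h \<in> carrier G" if "h \<in> H" for h using subgroup.mem_carrier[OF H that] .
  have cA: "a \<in> carrier G" if "a \<in> A" for a using normal_in_mem_carrier[OF A that] .
  show "?C \<subseteq> carrier G" using cH unfolding centralizer_in_def by blast
  show "?C \<noteq> {}"
    using cA normal_in_one[OF B] subgroup.one_closed[OF H] unfolding centralizer_in_def by force
next
  fix c assume c: "c \<in> centralizer_in G H A B"
  then have h: "c \<in> H" unfolding mem_centralizer_in_iff by auto
  show "inv c \<in> centralizer_in G H A B" unfolding mem_centralizer_in_iff
  proof (intro conjI ballI)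
    show "inv c \<in> H" using subgroup.m_inv_closed[OF H h] .
    fix a assume a: "a \<in> A"
    have "inv c \<otimes> a \<otimes> c \<in> A" using normal_in_conj_inv[OF H A h a] .
    then have "c \<otimes> (inv c \<otimes> a \<otimes> c) \<otimes> inv c \<otimes> inv (inv c \<otimes> a \<otimes> c) \<in> B"
      using c unfolding mem_centralizer_in_iff by auto
    moreover have "inv c \<otimes> a \<otimes> inv (inv c) \<otimes> inv a
        = inv (c \<otimes> (inv c \<otimes> a \<otimes> c) \<otimes> inv c \<otimes> inv (inv c \<otimes> a \<otimes> c))"
      using subgroup.mem_carrier[OF H h] normal_in_mem_carrier[OF A a] by (simp add: m_assoc inv_mult_group)
    ultimately show "inv c \<otimes> a \<otimes> inv (inv c) \<otimes> inv a \<in> B" using normal_in_inv_closed[OF B] by simp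
  qed
next
  fix c1 c2 assume c1: "c1 \<in> centralizer_in G H A B" and c2: "c2 \<in> centralizer_in G H A B"
  then have h1: "c1 \<in> H" and h2: "c2 \<in> H" unfolding mem_centralizer_in_iff by auto
  show "c1 \<otimes> c2 \<in> centralizer_in G H A B" unfolding mem_centralizer_in_iff
  proof (intro conjI ballI)
    show "c1 \<otimes> c2 \<in> H" using subgroup.m_closed[OF H h1 h2] .
    fix a assume a: "a \<in> A"
    have k2: "c2 \<otimes> a \<otimes> inv c2 \<otimes> inv a \<in> B" and k1: "c1 \<otimes> a \<otimes> inv c1 \<otimes> inv a \<in> B"
      using c1 c2 a unfolding mem_centralizer_in_iff by auto
    have "c1 \<otimes> c2 \<otimes> a \<otimes> inv (c1 \<otimes> c2) \<otimes> inv a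
        = (c1 \<otimes> (c2 \<otimes> a \<otimes> inv c2 \<otimes> inv a) \<otimes> inv c1) \<otimes> (c1 \<otimes> a \<otimes> inv c1 \<otimes> inv a)"
      using subgroup.mem_carrier[OF H h1] subgroup.mem_carrier[OF H h2] normal_in_mem_carrier[OF A a]
      by (simp add: m_assoc inv_mult_group)
    then show "c1 \<otimes> c2 \<otimes> a \<otimes> inv (c1 \<otimes> c2) \<otimes> inv a \<in> B"
      using normal_in_m_closed[OF B normal_in_conj[OF B h1 k2] k1] by simp
  qed
qed

lemma normal_in_centralizer_in:
  assumes H: "subgroup H G" and A: "normal_in G H A" and B: "normal_in G H B"
  shows "normal_in G H (centralizer_in G H A B)"
  unfolding normal_in_def
proof (intro conjI ballI)
  show "subgroup (centralizer_in G H A B) G" using subgroup_centralizer_in[OF H A B] .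
  show "centralizer_in G H A B \<subseteq> H" unfolding centralizer_in_def by blast
  fix h c assume h: "h \<in> H" and c: "c \<in> centralizer_in G H A B"
  then have hc: "c \<in> H" unfolding mem_centralizer_in_iff by auto
  show "h \<otimes> c \<otimes> inv h \<in> centralizer_in G H A B" unfolding mem_centralizer_in_iff
  proof (intro conjI ballI)
    show "h \<otimes> c \<otimes> inv h \<in> H" using H h hc by (simp add: subgroup.m_closed subgroup.m_inv_closed)
    fix a assume a: "a \<in> A"
    have "inv h \<otimes> a \<otimes> h \<in> A" using normal_in_conj_inv[OF H A h a] .
    then have "c \<otimes> (inv h \<otimes> a \<otimes> h) \<otimes> inv c \<otimes> inv (inv h \<otimes> a \<otimes> h) \<in> B"
      using c unfolding mem_centralizer_in_iff by auto
    moreover have "h \<otimes> c \<otimes> inv h \<otimes> a \<otimes> inv (h \<otimes> c \<otimes> inv h) \<otimes> inv a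
       = h \<otimes> (c \<otimes> (inv h \<otimes> a \<otimes> h) \<otimes> inv c \<otimes> inv (inv h \<otimes> a \<otimes> h)) \<otimes> inv h"
      using subgroup.mem_carrier[OF H h] subgroup.mem_carrier[OF H hc] normal_in_mem_carrier[OF A a]
      by (simp add: m_assoc inv_mult_group)
    ultimately show "h \<otimes> c \<otimes> inv h \<otimes> a \<otimes> inv (h \<otimes> c \<otimes> inv h) \<otimes> inv a \<in> B"
      using normal_in_conj[OF B h] by simp
  qed
qed

lemma centralizer_in_conj:
  assumes H: "subgroup H G" and A: "normal_in G H A" and B: "normal_in G H B"
    and c: "c \<in> centralizer_in G H A B" and x: "x \<in> A" and b: "b \<in> B"
  shows "\<exists>b'\<in>B. c \<otimes> (x \<otimes> b) \<otimes> inv c = x \<otimes> b'"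
proof -
  have cH: "c \<in> H" and k: "c \<otimes> x \<otimes> inv c \<otimes> inv x \<in> B" using c x unfolding mem_centralizer_in_iff by auto
  have cc: "c \<in> carrier G" and xc: "x \<in> carrier G" and bc: "b \<in> carrier G"
    using subgroup.mem_carrier[OF H cH] normal_in_mem_carrier[OF A x] normal_in_mem_carrier[OF B b] .
  have "inv x \<otimes> (c \<otimes> x \<otimes> inv c \<otimes> inv x) \<otimes> x \<otimes> (c \<otimes> b \<otimes> inv c) \<in> B"
    using normal_in_m_closed[OF B normal_in_conj_inv[OF H B subsetD[OF normal_in_subset[OF A] x] k]
        normal_in_conj[OF B cH b]] .
  moreover have "c \<otimes> (x \<otimes> b) \<otimes> inv c = x \<otimes> (inv x \<otimes> (c \<otimes> x \<otimes> inv c \<otimes> inv x) \<otimes> x \<otimes> (c \<otimes> b \<otimes> inv c))"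
    using cc xc bc by (simp add: m_assoc)
  ultimately show ?thesis by blast
qed

lemma centralizer_in_eq_self:
  assumes H: "subgroup H G" and A: "normal_in G H A" and B: "normal_in G H B"
    and central: "\<And>a h. a \<in> A \<Longrightarrow> h \<in> H \<Longrightarrow> a \<otimes> h \<otimes> inv a \<otimes> inv h \<in> B"
  shows "centralizer_in G H A B = H"
proof -
  have "h \<otimes> a \<otimes> inv h \<otimes> inv a \<in> B" if "h \<in> H" "a \<in> A" for h a
  proof -
    have "h \<otimes> a \<otimes> inv h \<otimes> inv a = inv (a \<otimes> h \<otimes> inv a \<otimes> inv h)"
      using subgroup.mem_carrier[OF H that(1)] normal_in_mem_carrier[OF A that(2)]
      by (simp add: inv_mult_group m_assoc)
    then show ?thesis using normal_in_inv_closed[OF B central[OF that(2,1)]] by simp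
  qed
  then show ?thesis unfolding centralizer_in_def by blast
qed

lemma normal_in_set_mult_centralizer:
  assumes H: "subgroup H G" and K: "subgroup K G" "K \<subseteq> H"
    and A: "normal_in G H A" and B: "normal_in G H B" and HC: "H \<subseteq> centralizer_in G H A B <#> K"
    and M: "normal_in G K M" "M \<subseteq> A"
  shows "normal_in G H (M <#> B)"
  unfolding normal_in_def
proof (intro conjI ballI)
  have MH: "M \<subseteq> H" using normal_in_subset[OF M(1)] K(2) by blast
  show "subgroup (M <#> B) G" using subgroup_set_mult_normal_in[OF H normal_in_subgroup[OF M(1)] MH B] .
  show "M <#> B \<subseteq> H" using set_mult_subset_subgroup[OF H MH normal_in_subset[OF B]] .
  fix h y assume h: "h \<in> H" and y: "y \<in> M <#> B"
  obtain c k where c: "c \<in> centralizer_in G H A B" and k: "k \<in> K" and h: "h = c \<otimes> k"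
    using subsetD[OF HC h] unfolding set_mult_mem_iff by blast
  obtain m b where m: "m \<in> M" and b: "b \<in> B" and y: "y = m \<otimes> b"
    using y unfolding set_mult_mem_iff by blast
  have kH: "k \<in> H" and cH: "c \<in> H" using k K(2) c unfolding mem_centralizer_in_iff by auto
  have carr: "c \<in> carrier G" "k \<in> carrier G" "m \<in> carrier G" "b \<in> carrier G"
    using subgroup.mem_carrier[OF H cH] subgroup.mem_carrier[OF K(1) k] normal_in_mem_carrier[OF M(1) m]
      normal_in_mem_carrier[OF B b] .
  have m': "k \<otimes> m \<otimes> inv k \<in> M" "k \<otimes> m \<otimes> inv k \<in> A"
    using normal_in_conj[OF M(1) k m] M(2) by auto
  obtain b' where "b' \<in> B"
    and "c \<otimes> ((k \<otimes> m \<otimes> inv k) \<otimes> (k \<otimes> b \<otimes> inv k)) \<otimes> inv c = (k \<otimes> m \<otimes> inv k) \<otimes> b'"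
    using centralizer_in_conj[OF H A B c m'(2) normal_in_conj[OF B kH b]] by blast
  moreover have "h \<otimes> y \<otimes> inv h = c \<otimes> ((k \<otimes> m \<otimes> inv k) \<otimes> (k \<otimes> b \<otimes> inv k)) \<otimes> inv c"
    unfolding h y using carr by (simp add: m_assoc inv_mult_group)
  ultimately show "h \<otimes> y \<otimes> inv h \<in> M <#> B" using m'(1) set_mult_memI by metis
qed

lemma chief_factor_in_restrict:
  assumes H: "subgroup H G" and K: "subgroup K G" "K \<subseteq> H" and cf: "chief_factor_in G H A B"
    and N: "normal_in G K N" and AN: "A \<subseteq> (A \<inter> N) <#> B" and HC: "H \<subseteq> centralizer_in G H A B <#> K"
  shows "chief_factor_in G K (A \<inter> N) (B \<inter> N)"
  unfolding chief_factor_in_def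
proof (intro conjI allI impI)
  note A = chief_factor_inD(1)[OF cf] and B = chief_factor_inD(2)[OF cf] and BA = chief_factor_inD(3)[OF cf]
  have HK: "H \<inter> K = K" using K(2) by blast
  show "normal_in G K (A \<inter> N)" "normal_in G K (B \<inter> N)"
    using normal_in_Int_Int[OF A N] normal_in_Int_Int[OF B N] unfolding HK .
  have "\<not> A \<inter> N \<subseteq> B"
    using AN set_mult_subset_subgroup[OF normal_in_subgroup[OF B], of "A \<inter> N" B] chief_factor_inD(3,4)[OF cf]
    by blast
  then show "B \<inter> N \<subset> A \<inter> N" using BA by blast
  fix M assume "normal_in G K M \<and> B \<inter> N \<subseteq> M \<and> M \<subseteq> A \<inter> N"
  then have M: "normal_in G K M" and BM: "B \<inter> N \<subseteq> M" and MA: "M \<subseteq> A \<inter> N" by auto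
  have "normal_in G H (M <#> B)" using normal_in_set_mult_centralizer[OF H K A B HC M] MA by blast
  moreover have "B \<subseteq> M <#> B"
    using subset_set_mult_right[OF normal_in_one[OF M] subgroup.subset[OF normal_in_subgroup[OF B]]] .
  moreover have "M <#> B \<subseteq> A" using set_mult_subset_subgroup[OF normal_in_subgroup[OF A] _ BA] MA by blast
  ultimately have "M <#> B = B \<or> M <#> B = A" using chief_factor_in_minimal[OF cf] by blast
  then show "M = B \<inter> N \<or> M = A \<inter> N"
  proof
    assume "M <#> B = B"
    then have "M \<subseteq> B"
      using subset_set_mult_left[OF subgroup.subset[OF normal_in_subgroup[OF M]] normal_in_one[OF B]] by simp
    then show ?thesis using BM MA by blast
  next
    assume "M <#> B = A"
    then have "A \<inter> N = N \<inter> (M <#> B)" by blast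
    also have "\<dots> = M <#> (N \<inter> B)"
      using dedekind_law_left[OF normal_in_subgroup[OF N] normal_in_subgroup[OF M] normal_in_subgroup[OF B]] MA
      by blast
    also have "\<dots> = M"
    proof (rule set_mult_subgroup_absorb[OF normal_in_subgroup[OF M]])
      show "N \<inter> B \<subseteq> M" "\<one> \<in> N \<inter> B" using BM normal_in_one[OF N] normal_in_one[OF B] by auto
    qed
    finally show ?thesis by blast
  qed
qed

lemma chief_factor_in_Int:
  assumes H: "subgroup H G" and cf: "chief_factor_in G H A B" and N: "normal_in G H N"
    and "\<not> A \<inter> N \<subseteq> B"
  shows "chief_factor_in G H (A \<inter> N) (B \<inter> N)" and "A = (A \<inter> N) <#> B"
proof -
  note A = chief_factor_inD(1)[OF cf] and B = chief_factor_inD(2)[OF cf] and BA = chief_factor_inD(3)[OF cf]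
  have AN: "normal_in G H (A \<inter> N)" using normal_in_Int[OF A N] .
  have "A \<inter> N \<subseteq> (A \<inter> N) <#> B"
    using subset_set_mult_left[OF subgroup.subset[OF normal_in_subgroup[OF AN]] normal_in_one[OF B]] .
  then have "(A \<inter> N) <#> B \<noteq> B" using assms(4) by blast
  moreover have "B \<subseteq> (A \<inter> N) <#> B"
    using subset_set_mult_right[OF normal_in_one[OF AN] subgroup.subset[OF normal_in_subgroup[OF B]]] .
  moreover have "(A \<inter> N) <#> B \<subseteq> A" using set_mult_subset_subgroup[OF normal_in_subgroup[OF A] _ BA] by blast
  ultimately show A_eq: "A = (A \<inter> N) <#> B"
    using chief_factor_in_minimal[OF cf normal_in_set_mult[OF H AN B]] by blast
  have "H \<subseteq> centralizer_in G H A B <#> H"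
    using subset_set_mult_right[OF normal_in_one[OF normal_in_centralizer_in[OF H A B]] subgroup.subset[OF H]] .
  then show "chief_factor_in G H (A \<inter> N) (B \<inter> N)"
    using chief_factor_in_restrict[OF H H subset_refl cf N] A_eq by blast
qed

lemma chief_factor_in_set_mult:
  assumes H: "subgroup H G" and cf: "chief_factor_in G H A B" and N: "normal_in G H N"
    and AN: "A \<inter> N \<subseteq> B"
  shows "chief_factor_in G H (A <#> N) (B <#> N)"
proof -
  note A = chief_factor_inD(1)[OF cf] and B = chief_factor_inD(2)[OF cf] and BA = chief_factor_inD(3)[OF cf]
  have A_NB: "A \<inter> (B <#> N) = B"
  proof -
    have "A \<inter> (B <#> N) = B <#> (A \<inter> N)"
      using dedekind_law_left[OF normal_in_subgroup[OF A] normal_in_subgroup[OF B] normal_in_subgroup[OF N] BA] .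
    also have "\<dots> = B"
      using set_mult_subgroup_absorb[OF normal_in_subgroup[OF B] AN] normal_in_one[OF A] normal_in_one[OF N] by blast
    finally show ?thesis .
  qed
  have A_AN: "A \<subseteq> A <#> N"
    using subset_set_mult_left[OF subgroup.subset[OF normal_in_subgroup[OF A]] normal_in_one[OF N]] .
  show ?thesis unfolding chief_factor_in_def
  proof (intro conjI allI impI)
    show "normal_in G H (A <#> N)" "normal_in G H (B <#> N)"
      using normal_in_set_mult[OF H A N] normal_in_set_mult[OF H B N] .
    have "B <#> N \<noteq> A <#> N" using A_NB A_AN chief_factor_inD(4)[OF cf] by blast
    then show "B <#> N \<subset> A <#> N" using mono_set_mult[OF BA subset_refl] by blast
    fix M assume "normal_in G H M \<and> B <#> N \<subseteq> M \<and> M \<subseteq> A <#> N"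
    then have M: "normal_in G H M" and BM: "B <#> N \<subseteq> M" and MA: "M \<subseteq> A <#> N" by auto
    have NM: "N \<subseteq> M"
      using BM subset_set_mult_right[OF normal_in_one[OF B] subgroup.subset[OF normal_in_subgroup[OF N]]] by blast
    have "B \<subseteq> M \<inter> A"
      using BM BA subset_set_mult_left[OF subgroup.subset[OF normal_in_subgroup[OF B]] normal_in_one[OF N]] by blast
    then have "M \<inter> A = B \<or> M \<inter> A = A"
      using chief_factor_in_minimal[OF cf normal_in_Int[OF M A]] by blast
    then show "M = B <#> N \<or> M = A <#> N"
    proof
      assume "M \<inter> A = B"
      have "M = M \<inter> (A <#> N)" using MA by blast
      also have "\<dots> = (M \<inter> A) <#> N"
        using dedekind_law_right[OF normal_in_subgroup[OF M] normal_in_subgroup[OF A] normal_in_subgroup[OF N] NM] .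
      finally show ?thesis using \<open>M \<inter> A = B\<close> by blast
    next
      assume "M \<inter> A = A"
      then have "A <#> N \<subseteq> M" using set_mult_subset_subgroup[OF normal_in_subgroup[OF M] _ NM] by blast
      then show ?thesis using MA by blast
    qed
  qed
qed

lemma conj_rcos_centralizer_in:
  assumes H: "subgroup H G" and A: "normal_in G H A" and B: "normal_in G H B" and BA: "B \<subseteq> A"
    and g: "g \<in> H" and x: "x \<in> A"
  shows "{s \<otimes> b \<otimes> inv s | s b. s \<in> centralizer_in G H A B #> g \<and> b \<in> B #> x} = B #> (g \<otimes> x \<otimes> inv g)"
proof
  let ?C = "centralizer_in G H A B"
  have cH: "h \<in> carrier G" if "h \<in> H" for h using subgroup.mem_carrier[OF H that] .
  have cA: "a \<in> carrier G" if "a \<in> A" for a using normal_in_mem_carrier[OF A that] .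
  have cB: "b \<in> carrier G" if "b \<in> B" for b using normal_in_mem_carrier[OF B that] .
  show "{s \<otimes> b \<otimes> inv s | s b. s \<in> ?C #> g \<and> b \<in> B #> x} \<subseteq> B #> (g \<otimes> x \<otimes> inv g)"
  proof
    fix z assume "z \<in> {s \<otimes> b \<otimes> inv s | s b. s \<in> ?C #> g \<and> b \<in> B #> x}"
    then obtain c y where c: "c \<in> ?C" and y: "y \<in> B" and z: "z = (c \<otimes> g) \<otimes> (y \<otimes> x) \<otimes> inv (c \<otimes> g)"
      unfolding r_coset_mem_iff by blast
    have cH': "c \<in> H" using c unfolding mem_centralizer_in_iff by auto
    define w where "w = g \<otimes> (y \<otimes> x) \<otimes> inv g"
    have "w \<in> A" unfolding w_def using normal_in_conj[OF A g normal_in_m_closed[OF A _ x]] y BA by blast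
    then have "c \<otimes> w \<otimes> inv c \<otimes> inv w \<in> B" using c unfolding mem_centralizer_in_iff by auto
    then have "(c \<otimes> w \<otimes> inv c \<otimes> inv w) \<otimes> (g \<otimes> y \<otimes> inv g) \<in> B"
      using normal_in_m_closed[OF B _ normal_in_conj[OF B g y]] by blast
    moreover have "z = (c \<otimes> w \<otimes> inv c \<otimes> inv w) \<otimes> (g \<otimes> y \<otimes> inv g) \<otimes> (g \<otimes> x \<otimes> inv g)"
      unfolding z w_def using cH[OF cH'] cH[OF g] cB[OF y] cA[OF x] by (simp add: m_assoc inv_mult_group)
    ultimately show "z \<in> B #> (g \<otimes> x \<otimes> inv g)" unfolding r_coset_mem_iff by blast
  qed
  show "B #> (g \<otimes> x \<otimes> inv g) \<subseteq> {s \<otimes> b \<otimes> inv s | s b. s \<in> ?C #> g \<and> b \<in> B #> x}"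
  proof
    fix z assume "z \<in> B #> (g \<otimes> x \<otimes> inv g)"
    then obtain y where y: "y \<in> B" "z = y \<otimes> (g \<otimes> x \<otimes> inv g)" unfolding r_coset_mem_iff by blast
    have "g \<in> ?C #> g"
      using rcos_self[OF cH[OF g] normal_in_subgroup[OF normal_in_centralizer_in[OF H A B]]] .
    moreover have "(inv g \<otimes> y \<otimes> g) \<otimes> x \<in> B #> x"
      using normal_in_conj_inv[OF H B g y(1)] unfolding r_coset_mem_iff by blast
    moreover have "z = g \<otimes> ((inv g \<otimes> y \<otimes> g) \<otimes> x) \<otimes> inv g"
      unfolding y(2) using cH[OF g] cB[OF y(1)] cA[OF x] by (simp add: m_assoc)
    ultimately show "z \<in> {s \<otimes> b \<otimes> inv s | s b. s \<in> ?C #> g \<and> b \<in> B #> x}" by blast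
  qed
qed

lemma carrier_semidirect_factor:
  assumes "subgroup H G" "normal_in G H A"
  shows "carrier (semidirect_factor (G\<lparr>carrier := H\<rparr>) A B)
     = {B #> a | a. a \<in> A} \<times> {centralizer_in G H A B #> h | h. h \<in> H}"
  unfolding semidirect_factor_def Let_def centralizer_in_eq[OF assms(1) normal_in_subset[OF assms(2)]]
  by (auto simp: RCOSETS_def)

lemma one_semidirect_factor:
  assumes "subgroup H G" "normal_in G H A"
  shows "\<one>\<^bsub>semidirect_factor (G\<lparr>carrier := H\<rparr>) A B\<^esub> = (B, centralizer_in G H A B)"
  unfolding semidirect_factor_def Let_def centralizer_in_eq[OF assms(1) normal_in_subset[OF assms(2)]]
  by simp

lemma mult_semidirect_factor:
  assumes H: "subgroup H G" and A: "normal_in G H A" and B: "normal_in G H B" and BA: "B \<subseteq> A"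
    and "x \<in> A" "x' \<in> A" "g \<in> H" "g' \<in> H"
  shows "(B #> x, centralizer_in G H A B #> g) \<otimes>\<^bsub>semidirect_factor (G\<lparr>carrier := H\<rparr>) A B\<^esub>
           (B #> x', centralizer_in G H A B #> g')
       = (B #> (x \<otimes> (g \<otimes> x' \<otimes> inv g)), centralizer_in G H A B #> (g \<otimes> g'))"
proof -
  let ?C = "centralizer_in G H A B"
  have CH: "?C #> g \<subseteq> H"
    using normal_in_subset[OF normal_in_centralizer_in[OF H A B]] assms(7) subgroup.m_closed[OF H]
    unfolding r_coset_def by blast
  then have "{s \<otimes> b \<otimes> inv\<^bsub>G\<lparr>carrier := H\<rparr>\<^esub> s | s b. s \<in> ?C #> g \<and> b \<in> B #> x'}
      = B #> (g \<otimes> x' \<otimes> inv g)"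
    using conj_rcos_centralizer_in[OF H A B BA assms(7,6)] H m_inv_consistent by force
  moreover have "x \<in> H" "x' \<in> H" "g \<otimes> x' \<otimes> inv g \<in> H"
    using assms(5,6) normal_in_subset[OF A] normal_in_conj[OF A assms(7,6)] by auto
  ultimately show ?thesis
    unfolding semidirect_factor_def Let_def centralizer_in_eq[OF H normal_in_subset[OF A]]
    using rcos_mult_normal_in[OF H B] rcos_mult_normal_in[OF H normal_in_centralizer_in[OF H A B]] assms(7,8)
    by simp
qed

lemma group_semidirect_factor_if_in_class:
  assumes "in_class F (semidirect_factor (G\<lparr>carrier := H\<rparr>) A B)"
    and H: "subgroup H G" and A: "normal_in G H A" and B: "normal_in G H B" and BA: "B \<subseteq> A"
  shows "group (semidirect_factor (G\<lparr>carrier := H\<rparr>) A B)"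
proof (rule in_class_imp_group[OF assms(1)], unfold carrier_semidirect_factor[OF H A])
  let ?C = "centralizer_in G H A B"
  have one: "\<one>\<^bsub>semidirect_factor (G\<lparr>carrier := H\<rparr>) A B\<^esub> = (B #> \<one>, ?C #> \<one>)"
    using one_semidirect_factor[OF H A] normal_in_subset[OF B] normal_in_subset[OF normal_in_centralizer_in[OF H A B]]
      subgroup.subset[OF H] by (simp add: coset_mult_one subset_trans)
  show "\<one>\<^bsub>semidirect_factor (G\<lparr>carrier := H\<rparr>) A B\<^esub> \<in> {B #> a |a. a \<in> A} \<times> {?C #> h |h. h \<in> H}"
    unfolding one using normal_in_one[OF A] subgroup.one_closed[OF H] by blast
  show "\<one>\<^bsub>semidirect_factor (G\<lparr>carrier := H\<rparr>) A B\<^esub> \<otimes>\<^bsub>semidirect_factor (G\<lparr>carrier := H\<rparr>) A B\<^esub>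
      \<one>\<^bsub>semidirect_factor (G\<lparr>carrier := H\<rparr>) A B\<^esub> = \<one>\<^bsub>semidirect_factor (G\<lparr>carrier := H\<rparr>) A B\<^esub>"
    unfolding one using mult_semidirect_factor[OF H A B BA] normal_in_one[OF A] subgroup.one_closed[OF H]
    by simp
  fix u v assume "u \<in> {B #> a |a. a \<in> A} \<times> {?C #> h |h. h \<in> H}" "v \<in> {B #> a |a. a \<in> A} \<times> {?C #> h |h. h \<in> H}"
  then obtain x g x' g' where "x \<in> A" "g \<in> H" "x' \<in> A" "g' \<in> H"
    and uv: "u = (B #> x, ?C #> g)" "v = (B #> x', ?C #> g')" by blast
  moreover have "x \<otimes> (g \<otimes> x' \<otimes> inv g) \<in> A" "g \<otimes> g' \<in> H"
    using calculation normal_in_m_closed[OF A] normal_in_conj[OF A] subgroup.m_closed[OF H] by auto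
  ultimately show "u \<otimes>\<^bsub>semidirect_factor (G\<lparr>carrier := H\<rparr>) A B\<^esub> v \<in> {B #> a |a. a \<in> A} \<times> {?C #> h |h. h \<in> H}"
    using mult_semidirect_factor[OF H A B BA] by auto
qed

lemma carrier_semidirect_factor_reps:
  assumes H: "subgroup H G" and A: "normal_in G H A" and B: "normal_in G H B"
    and "V \<subseteq> A" "A \<subseteq> V <#> B" "K \<subseteq> H" "H \<subseteq> centralizer_in G H A B <#> K"
  shows "carrier (semidirect_factor (G\<lparr>carrier := H\<rparr>) A B)
       = {(B #> x, centralizer_in G H A B #> g) | x g. x \<in> V \<and> g \<in> K}"
proof -
  let ?C = "centralizer_in G H A B"
  have "(B #> a, ?C #> h) \<in> {(B #> x, ?C #> g) | x g. x \<in> V \<and> g \<in> K}" if ah: "a \<in> A" "h \<in> H" for a h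
  proof -
    obtain x b where x: "x \<in> V" and b: "b \<in> B" and a: "a = x \<otimes> b"
      using subsetD[OF assms(5) ah(1)] unfolding set_mult_mem_iff by blast
    obtain c g where c: "c \<in> ?C" and g: "g \<in> K" and h: "h = c \<otimes> g"
      using subsetD[OF assms(7) ah(2)] unfolding set_mult_mem_iff by blast
    have xH: "x \<in> H" and xc: "x \<in> carrier G" using x assms(4) normal_in_subset[OF A] subgroup.mem_carrier[OF H]
      by auto
    have "a = (x \<otimes> b \<otimes> inv x) \<otimes> x" using a xc normal_in_mem_carrier[OF B b] by (simp add: m_assoc)
    then have "B #> a = B #> x"
      using rcos_mult_absorb[OF normal_in_subgroup[OF B] normal_in_conj[OF B xH b] xc] by simp
    moreover have "?C #> h = ?C #> g"
      using rcos_mult_absorb[OF normal_in_subgroup[OF normal_in_centralizer_in[OF H A B]] c]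
        g h assms(6) subgroup.mem_carrier[OF H] by blast
    ultimately show ?thesis using x g by blast
  qed
  then show ?thesis unfolding carrier_semidirect_factor[OF H A] using assms(4,6) by blast
qed

lemma subgroup_semidirect_factor_cosets:
  assumes grp: "group (semidirect_factor (G\<lparr>carrier := G0\<rparr>) W Y)"
    and G0: "subgroup G0 G" and W: "normal_in G G0 W" and Y: "normal_in G G0 Y" and YW: "Y \<subseteq> W"
    and K: "subgroup K G" "K \<subseteq> G0" and V: "normal_in G K V" "V \<subseteq> W"
  shows "subgroup {(Y #> x, centralizer_in G G0 W Y #> g) | x g. x \<in> V \<and> g \<in> K}
           (semidirect_factor (G\<lparr>carrier := G0\<rparr>) W Y)"
    (is "subgroup ?U ?S")
proof (rule group.subgroupI[OF grp])
  let ?C = "centralizer_in G G0 W Y"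
  have mult: "(Y #> x, ?C #> g) \<otimes>\<^bsub>?S\<^esub> (Y #> x', ?C #> g') = (Y #> (x \<otimes> (g \<otimes> x' \<otimes> inv g)), ?C #> (g \<otimes> g'))"
    if "x \<in> V" "x' \<in> V" "g \<in> K" "g' \<in> K" for x x' g g'
    using mult_semidirect_factor[OF G0 W Y YW] that V(2) K(2) by blast
  show "?U \<subseteq> carrier ?S" unfolding carrier_semidirect_factor[OF G0 W] using V(2) K(2) by blast
  show "?U \<noteq> {}" using normal_in_one[OF V(1)] subgroup.one_closed[OF K(1)] by blast
next
  let ?C = "centralizer_in G G0 W Y"
  fix u assume "u \<in> ?U"
  then obtain x g where x: "x \<in> V" and g: "g \<in> K" and u: "u = (Y #> x, ?C #> g)" by blast
  let ?x' = "inv g \<otimes> inv x \<otimes> g"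
  have x': "?x' \<in> V" and g': "inv g \<in> K"
    using normal_in_conj_inv[OF K(1) V(1) g normal_in_inv_closed[OF V(1) x]] subgroup.m_inv_closed[OF K(1) g] .
  have xc: "x \<in> carrier G" and gc: "g \<in> carrier G"
    using normal_in_mem_carrier[OF V(1) x] subgroup.mem_carrier[OF K(1) g] .
  have "(Y #> ?x', ?C #> inv g) \<otimes>\<^bsub>?S\<^esub> u = (Y #> \<one>, ?C #> \<one>)"
    unfolding u using mult_semidirect_factor[OF G0 W Y YW] x x' g g' V(2) K(2) xc gc
    by (simp add: subset_iff m_assoc)
  also have "\<dots> = \<one>\<^bsub>?S\<^esub>"
    using one_semidirect_factor[OF G0 W] subgroup.subset[OF normal_in_subgroup[OF Y]]
      subgroup.subset[OF normal_in_subgroup[OF normal_in_centralizer_in[OF G0 W Y]]] by simp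
  finally have "inv\<^bsub>?S\<^esub> u = (Y #> ?x', ?C #> inv g)"
    using group.inv_equality[OF grp] x x' g g' V(2) K(2) unfolding u carrier_semidirect_factor[OF G0 W] by blast
  then show "inv\<^bsub>?S\<^esub> u \<in> ?U" using x' g' by blast
next
  let ?C = "centralizer_in G G0 W Y"
  fix u v assume "u \<in> ?U" "v \<in> ?U"
  then obtain x g x' g' where xg: "x \<in> V" "g \<in> K" "x' \<in> V" "g' \<in> K"
    and "u = (Y #> x, ?C #> g)" "v = (Y #> x', ?C #> g')" by blast
  then have "u \<otimes>\<^bsub>?S\<^esub> v = (Y #> (x \<otimes> (g \<otimes> x' \<otimes> inv g)), ?C #> (g \<otimes> g'))"
    using mult_semidirect_factor[OF G0 W Y YW] V(2) K(2) by (simp add: subset_iff)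
  moreover have "x \<otimes> (g \<otimes> x' \<otimes> inv g) \<in> V" "g \<otimes> g' \<in> K"
    using normal_in_m_closed[OF V(1) xg(1) normal_in_conj[OF V(1) xg(2,3)]] subgroup.m_closed[OF K(1) xg(2,4)] .
  ultimately show "u \<otimes>\<^bsub>?S\<^esub> v \<in> ?U" by blast
qed

lemma semidirect_factor_cosets_map:
  assumes G0: "subgroup G0 G" and W: "normal_in G G0 W" and Y: "normal_in G G0 Y" and YW: "Y \<subseteq> W"
    and H: "subgroup H G" and A: "normal_in G H A" and B: "normal_in G H B" and BA: "B \<subseteq> A"
    and f: "\<And>x g. x \<in> W \<inter> A \<Longrightarrow> g \<in> G0 \<inter> H \<Longrightarrow>
      f (Y #> x, centralizer_in G G0 W Y #> g) = (B #> x, centralizer_in G H A B #> g)"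
  shows "f \<in> hom ((semidirect_factor (G\<lparr>carrier := G0\<rparr>) W Y)
      \<lparr>carrier := {(Y #> x, centralizer_in G G0 W Y #> g) | x g. x \<in> W \<inter> A \<and> g \<in> G0 \<inter> H}\<rparr>)
      (semidirect_factor (G\<lparr>carrier := H\<rparr>) A B)"
    and "f ` {(Y #> x, centralizer_in G G0 W Y #> g) | x g. x \<in> W \<inter> A \<and> g \<in> G0 \<inter> H}
      = {(B #> x, centralizer_in G H A B #> g) | x g. x \<in> W \<inter> A \<and> g \<in> G0 \<inter> H}"
proof -
  let ?U = "{(Y #> x, centralizer_in G G0 W Y #> g) | x g. x \<in> W \<inter> A \<and> g \<in> G0 \<inter> H}"
  show "f \<in> hom ((semidirect_factor (G\<lparr>carrier := G0\<rparr>) W Y)\<lparr>carrier := ?U\<rparr>) (semidirect_factor (G\<lparr>carrier := H\<rparr>) A B)"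
  proof (rule homI)
    fix u assume "u \<in> carrier ((semidirect_factor (G\<lparr>carrier := G0\<rparr>) W Y)\<lparr>carrier := ?U\<rparr>)"
    then show "f u \<in> carrier (semidirect_factor (G\<lparr>carrier := H\<rparr>) A B)"
      unfolding carrier_semidirect_factor[OF H A] using f by auto
  next
    fix u v assume "u \<in> carrier ((semidirect_factor (G\<lparr>carrier := G0\<rparr>) W Y)\<lparr>carrier := ?U\<rparr>)"
      "v \<in> carrier ((semidirect_factor (G\<lparr>carrier := G0\<rparr>) W Y)\<lparr>carrier := ?U\<rparr>)"
    then obtain x g x' g' where "x \<in> W \<inter> A" "g \<in> G0 \<inter> H" "x' \<in> W \<inter> A" "g' \<in> G0 \<inter> H"
      and "u = (Y #> x, centralizer_in G G0 W Y #> g)" "v = (Y #> x', centralizer_in G G0 W Y #> g')" by auto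
    moreover have "x \<otimes> (g \<otimes> x' \<otimes> inv g) \<in> W \<inter> A" "g \<otimes> g' \<in> G0 \<inter> H"
      using calculation normal_in_m_closed[OF normal_in_Int_Int[OF W A]]
        normal_in_conj[OF normal_in_Int_Int[OF W A]] subgroup.m_closed[OF subgroups_Inter_pair[OF G0 H]] by auto
    ultimately show "f (u \<otimes>\<^bsub>(semidirect_factor (G\<lparr>carrier := G0\<rparr>) W Y)\<lparr>carrier := ?U\<rparr>\<^esub> v)
        = f u \<otimes>\<^bsub>semidirect_factor (G\<lparr>carrier := H\<rparr>) A B\<^esub> f v"
      using mult_semidirect_factor[OF G0 W Y YW] mult_semidirect_factor[OF H A B BA] f by auto
  qed
  show "f ` ?U = {(B #> x, centralizer_in G H A B #> g) | x g. x \<in> W \<inter> A \<and> g \<in> G0 \<inter> H}"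
  proof
    show "f ` ?U \<subseteq> {(B #> x, centralizer_in G H A B #> g) | x g. x \<in> W \<inter> A \<and> g \<in> G0 \<inter> H}"
      using f by fastforce
    show "{(B #> x, centralizer_in G H A B #> g) | x g. x \<in> W \<inter> A \<and> g \<in> G0 \<inter> H} \<subseteq> f ` ?U"
    proof
      fix t assume "t \<in> {(B #> x, centralizer_in G H A B #> g) | x g. x \<in> W \<inter> A \<and> g \<in> G0 \<inter> H}"
      then obtain x g where "x \<in> W \<inter> A" "g \<in> G0 \<inter> H" "t = f (Y #> x, centralizer_in G G0 W Y #> g)"
        using f by auto
      then show "t \<in> f ` ?U" by blast
    qed
  qed
qed

end

section \<open>Transfer of \<open>F\<close>-centrality\<close>

context group begin

lemma centralizer_in_transfer:
  assumes H: "subgroup H G" and A: "normal_in G H A" and B: "normal_in G H B"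
    and YA: "Y \<inter> A \<subseteq> B" and AW: "A \<subseteq> (W \<inter> A) <#> B"
  shows "centralizer_in G G0 W Y \<inter> H \<subseteq> centralizer_in G H A B"
proof
  fix c assume "c \<in> centralizer_in G G0 W Y \<inter> H"
  then have cH: "c \<in> H" and cW: "\<forall>x\<in>W. c \<otimes> x \<otimes> inv c \<otimes> inv x \<in> Y"
    unfolding Int_iff mem_centralizer_in_iff by auto
  have "c \<otimes> a \<otimes> inv c \<otimes> inv a \<in> B" if a: "a \<in> A" for a
  proof -
    from AW a have "a \<in> (W \<inter> A) <#> B" by blast
    then obtain x b where x: "x \<in> W" "x \<in> A" and b: "b \<in> B" and axb: "a = x \<otimes> b"
      unfolding set_mult_mem_iff Int_iff by blast
    have "c \<otimes> x \<otimes> inv c \<otimes> inv x \<in> A"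
      using normal_in_m_closed[OF A normal_in_conj[OF A cH x(2)] normal_in_inv_closed[OF A x(2)]] .
    then have "c \<otimes> x \<otimes> inv c \<otimes> inv x \<in> B" using cW x(1) YA by blast
    moreover have "x \<otimes> (c \<otimes> b \<otimes> inv c \<otimes> inv b) \<otimes> inv x \<in> B"
      using normal_in_conj[OF B subsetD[OF normal_in_subset[OF A] x(2)]
          normal_in_m_closed[OF B normal_in_conj[OF B cH b] normal_in_inv_closed[OF B b]]] .
    moreover have "c \<otimes> a \<otimes> inv c \<otimes> inv a
        = (c \<otimes> x \<otimes> inv c \<otimes> inv x) \<otimes> (x \<otimes> (c \<otimes> b \<otimes> inv c \<otimes> inv b) \<otimes> inv x)"
      using axb subgroup.mem_carrier[OF H cH] normal_in_mem_carrier[OF A x(2)] normal_in_mem_carrier[OF B b]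
      by (simp add: m_assoc inv_mult_group)
    ultimately show ?thesis using normal_in_m_closed[OF B] by simp
  qed
  then show "c \<in> centralizer_in G H A B" unfolding mem_centralizer_in_iff using cH by blast
qed

text \<open>The semidirect factor of \<open>A/B\<close> over \<open>H\<close> is a homomorphic image of the subgroup of the
  semidirect factor of \<open>W/Y\<close> over \<open>G0\<close> formed by the cosets of \<open>W \<inter> A\<close> and \<open>G0 \<inter> H\<close>.\<close>

lemma F_central_transfer:
  assumes her: "hereditary_formation F"
    and G0: "subgroup G0 G" and H: "subgroup H G"
    and W: "normal_in G G0 W" and Y: "normal_in G G0 Y" and YW: "Y \<subseteq> W"
    and A: "normal_in G H A" and B: "normal_in G H B" and BA: "B \<subseteq> A"
    and YA: "Y \<inter> A \<subseteq> B" and AW: "A \<subseteq> (W \<inter> A) <#> B"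
    and HC: "H \<subseteq> centralizer_in G H A B <#> (G0 \<inter> H)"
    and central: "F_central F (G\<lparr>carrier := G0\<rparr>) W Y"
  shows "F_central F (G\<lparr>carrier := H\<rparr>) A B"
proof -
  let ?S = "semidirect_factor (G\<lparr>carrier := G0\<rparr>) W Y"
  let ?C\<^sub>0 = "centralizer_in G G0 W Y"
  let ?C = "centralizer_in G H A B"
  define U where "U = {(Y #> x, ?C\<^sub>0 #> g) | x g. x \<in> W \<inter> A \<and> g \<in> G0 \<inter> H}"
  define f where "f = (\<lambda>(P, Q). (B <#> (P \<inter> A), ?C <#> (Q \<inter> H)))"
  have C0: "normal_in G G0 ?C\<^sub>0" and C: "normal_in G H ?C"
    using normal_in_centralizer_in[OF G0 W Y] normal_in_centralizer_in[OF H A B] .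
  have f: "f (Y #> x, ?C\<^sub>0 #> g) = (B #> x, ?C #> g)" if x: "x \<in> W \<inter> A" and g: "g \<in> G0 \<inter> H" for x g
  proof -
    have "B <#> ((Y #> x) \<inter> A) = B #> x"
      using x set_mult_rcos_Int_absorb[OF normal_in_subgroup[OF A] normal_in_subgroup[OF B]
          subgroup.subset[OF normal_in_subgroup[OF Y]] normal_in_one[OF Y] YA] by blast
    moreover have "?C <#> ((?C\<^sub>0 #> g) \<inter> H) = ?C #> g"
      using g set_mult_rcos_Int_absorb[OF H normal_in_subgroup[OF C] subgroup.subset[OF normal_in_subgroup[OF C0]]
          normal_in_one[OF C0] centralizer_in_transfer[OF H A B YA AW]] by blast
    ultimately show ?thesis unfolding f_def by simp
  qed
  have S: "in_class F ?S" using central unfolding F_central_def .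
  have grp: "group ?S" by (rule group_semidirect_factor_if_in_class[OF S G0 W Y YW])
  have U: "subgroup U ?S"
    unfolding U_def using subgroup_semidirect_factor_cosets[OF grp G0 W Y YW subgroups_Inter_pair[OF G0 H] _
        normal_in_Int_Int[OF W A]] by blast
  note map = semidirect_factor_cosets_map[OF G0 W Y YW H A B BA f, folded U_def]
  have onto: "f ` carrier (?S\<lparr>carrier := U\<rparr>) = carrier (semidirect_factor (G\<lparr>carrier := H\<rparr>) A B)"
    using map(2) carrier_semidirect_factor_reps[OF H A B Int_lower2 AW Int_lower2 HC] by simp
  have "formation F" using her unfolding hereditary_formation_def by blast
  from in_class_hom_image[OF this in_class_subgroup[OF her S grp U] subgroup.subgroup_is_group[OF U grp] map(1) onto]
  show ?thesis unfolding F_central_def .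
qed

lemma F_central_transfer_subgroup:
  assumes her: "hereditary_formation F" and H: "subgroup H G" and K: "subgroup K G" "K \<subseteq> H"
    and W: "normal_in G H W" and Y: "normal_in G H Y" and YW: "Y \<subseteq> W"
    and A: "normal_in G K A" and B: "normal_in G K B" and BA: "B \<subseteq> A"
    and YA: "Y \<inter> A \<subseteq> B" and AW: "A \<subseteq> (W \<inter> A) <#> B"
    and central: "F_central F (G\<lparr>carrier := H\<rparr>) W Y"
  shows "F_central F (G\<lparr>carrier := K\<rparr>) A B"
proof (rule F_central_transfer[OF her H K(1) W Y YW A B BA YA AW _ central])
  have "K \<subseteq> centralizer_in G K A B <#> K"
    using subset_set_mult_right normal_in_one[OF normal_in_centralizer_in[OF K(1) A B]] subgroup.subset[OF K(1)] .
  then show "K \<subseteq> centralizer_in G K A B <#> (H \<inter> K)" using K(2) by (simp add: Int_absorb1)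
qed

lemma comm_group_FactGroup_normal_in:
  assumes A: "subgroup A G" and B: "normal_in G A B"
    and central: "\<And>x y. x \<in> A \<Longrightarrow> y \<in> A \<Longrightarrow> x \<otimes> y \<otimes> inv x \<otimes> inv y \<in> B"
  shows "comm_group (G\<lparr>carrier := A\<rparr> Mod B)"
proof -
  have "B \<lhd> G\<lparr>carrier := A\<rparr>" using normal_in_iff[OF A] B by simp
  then show ?thesis
  proof (rule group.group_comm_groupI[OF normal.factorgroup_is_group])
    fix P P' assume "P \<in> carrier (G\<lparr>carrier := A\<rparr> Mod B)" "P' \<in> carrier (G\<lparr>carrier := A\<rparr> Mod B)"
    then obtain x y where x: "x \<in> A" "P = B #> x" and y: "y \<in> A" "P' = B #> y"
      unfolding carrier_FactGroup by auto
    have xc: "x \<in> carrier G" and yc: "y \<in> carrier G" using subgroup.mem_carrier[OF A] x y by auto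
    have "(x \<otimes> y) \<otimes> inv (y \<otimes> x) = x \<otimes> y \<otimes> inv x \<otimes> inv y"
      using xc yc by (simp add: inv_mult_group m_assoc)
    then have "B #> (x \<otimes> y) = B #> (y \<otimes> x)"
      using rcos_eq_iff[OF normal_in_subgroup[OF B]] central[OF x(1) y(1)] xc yc by simp
    then show "P \<otimes>\<^bsub>G\<lparr>carrier := A\<rparr> Mod B\<^esub> P' = P' \<otimes>\<^bsub>G\<lparr>carrier := A\<rparr> Mod B\<^esub> P"
      using rcos_mult_normal_in[OF A B] x y by simp
  qed
qed

lemma F_central_if_central:
  assumes form: "formation F" and nil: "contains_nilpotent F" and fin: "finite (carrier G)"
    and H: "subgroup H G" and cf: "chief_factor_in G H A B"
    and central: "\<And>a h. a \<in> A \<Longrightarrow> h \<in> H \<Longrightarrow> a \<otimes> h \<otimes> inv a \<otimes> inv h \<in> B"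
  shows "F_central F (G\<lparr>carrier := H\<rparr>) A B"
proof -
  note A = chief_factor_inD(1)[OF cf] and B = chief_factor_inD(2)[OF cf] and BA = chief_factor_inD(3)[OF cf]
  let ?Q = "G\<lparr>carrier := A\<rparr> Mod B"
  let ?T = "semidirect_factor (G\<lparr>carrier := H\<rparr>) A B"
  have AH: "A \<subseteq> H" and sA: "subgroup A G" using normal_in_subset[OF A] normal_in_subgroup[OF A] .
  have BA': "normal_in G A B" using B BA AH unfolding normal_in_def by blast
  have Q: "comm_group ?Q" using comm_group_FactGroup_normal_in[OF sA BA'] central AH by blast
  have carrier_Q: "carrier ?Q = {B #> a | a. a \<in> A}" unfolding carrier_FactGroup by auto
  have "finite A" using finite_subset[OF subgroup.subset[OF sA] fin] .
  then have "in_class F ?Q" using comm_group_in_class[OF nil Q] carrier_Q by simp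
  have C: "centralizer_in G H A B = H" using centralizer_in_eq_self[OF H A B central] .
  have H_rcos: "H #> h = H" if "h \<in> H" for h using subgroup.rcos_const[OF H is_group that] .
  have carrier_T: "carrier ?T = carrier ?Q \<times> {H}"
    unfolding carrier_semidirect_factor[OF H A] carrier_Q C using H_rcos subgroup.one_closed[OF H] by blast
  have "(\<lambda>P. (P, H)) \<in> hom ?Q ?T"
  proof (rule homI)
    fix P P' assume "P \<in> carrier ?Q" "P' \<in> carrier ?Q"
    then obtain x y where xy: "x \<in> A" "y \<in> A" and P: "P = B #> x" "P' = B #> y" unfolding carrier_Q by blast
    have "(P, H) \<otimes>\<^bsub>?T\<^esub> (P', H) = (B #> (x \<otimes> (\<one> \<otimes> y \<otimes> inv \<one>)), H #> (\<one> \<otimes> \<one>))"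
      using mult_semidirect_factor[OF H A B BA xy subgroup.one_closed[OF H] subgroup.one_closed[OF H]]
        P C H_rcos[OF subgroup.one_closed[OF H]] by simp
    also have "\<dots> = (P \<otimes>\<^bsub>?Q\<^esub> P', H)"
      using rcos_mult_normal_in[OF sA BA' xy] P H_rcos[OF subgroup.one_closed[OF H]]
        normal_in_mem_carrier[OF A] xy by simp
    finally show "(P \<otimes>\<^bsub>?Q\<^esub> P', H) = (P, H) \<otimes>\<^bsub>?T\<^esub> (P', H)" by simp
  qed (simp add: carrier_T)
  moreover have "(\<lambda>P. (P, H)) ` carrier ?Q = carrier ?T" unfolding carrier_T by blast
  ultimately show ?thesis
    unfolding F_central_def using in_class_hom_image[OF form \<open>in_class F ?Q\<close> comm_group.axioms(2)[OF Q]] by blast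
qed

end

section \<open>Hypercentral normal subgroups\<close>

definition hypercentral_in :: "(nat monoid \<Rightarrow> bool) \<Rightarrow> ('a,'b) monoid_scheme \<Rightarrow> 'a set \<Rightarrow> 'a set \<Rightarrow> bool" where
  "hypercentral_in F G H N \<longleftrightarrow> normal_in G H N \<and>
     (\<forall>A B. chief_factor_in G H A B \<and> A \<subseteq> N \<longrightarrow> F_central F (G\<lparr>carrier := H\<rparr>) A B)"

context group begin

lemma F_hypercentral_iff:
  "subgroup H G \<Longrightarrow> F_hypercentral F (G\<lparr>carrier := H\<rparr>) N \<longleftrightarrow> hypercentral_in F G H N"
  unfolding F_hypercentral_def hypercentral_in_def by (simp add: normal_in_iff chief_factor_in_iff)

lemma hypercentral_in_normal_in: "hypercentral_in F G H N \<Longrightarrow> normal_in G H N"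
  unfolding hypercentral_in_def by blast

lemma hypercentral_in_trivial: "subgroup H G \<Longrightarrow> hypercentral_in F G H {\<one>}"
  unfolding hypercentral_in_def using normal_in_trivial chief_factor_in_nontrivial by blast

lemma hypercentral_in_subset:
  "hypercentral_in F G H N \<Longrightarrow> normal_in G H L \<Longrightarrow> L \<subseteq> N \<Longrightarrow> hypercentral_in F G H L"
  unfolding hypercentral_in_def by blast

lemma F_central_if_not_below:
  assumes her: "hereditary_formation F" and H: "subgroup H G" and N: "hypercentral_in F G H N"
    and cf: "chief_factor_in G H A B" and "\<not> A \<inter> N \<subseteq> B"
  shows "F_central F (G\<lparr>carrier := H\<rparr>) A B"
proof -
  note A = chief_factor_inD(1)[OF cf] and B = chief_factor_inD(2)[OF cf] and BA = chief_factor_inD(3)[OF cf]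
  have nN: "normal_in G H N" using N unfolding hypercentral_in_def by blast
  note ANB = chief_factor_in_Int[OF H cf nN assms(5)]
  have "F_central F (G\<lparr>carrier := H\<rparr>) (A \<inter> N) (B \<inter> N)" using N ANB(1) unfolding hypercentral_in_def by blast
  moreover have "A \<subseteq> (A \<inter> N \<inter> A) <#> B" using ANB(2) by (simp add: Int_absorb2 inf_commute)
  ultimately show ?thesis
    using F_central_transfer_subgroup[OF her H H subset_refl normal_in_Int[OF A nN] normal_in_Int[OF B nN] _ A B BA]
      BA by blast
qed

lemma hypercentral_in_extend:
  assumes her: "hereditary_formation F" and H: "subgroup H G"
    and Z: "hypercentral_in F G H Z" and T: "normal_in G H T" "Z \<subseteq> T"
    and above: "\<And>A B. chief_factor_in G H A B \<Longrightarrow> Z \<subseteq> B \<Longrightarrow> A \<subseteq> T \<Longrightarrow> F_central F (G\<lparr>carrier := H\<rparr>) A B"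
  shows "hypercentral_in F G H T"
  unfolding hypercentral_in_def
proof (intro conjI allI impI)
  show "normal_in G H T" by (rule T(1))
  fix A B assume "chief_factor_in G H A B \<and> A \<subseteq> T"
  then have cf: "chief_factor_in G H A B" and AT: "A \<subseteq> T" by auto
  note A = chief_factor_inD(1)[OF cf] and B = chief_factor_inD(2)[OF cf] and BA = chief_factor_inD(3)[OF cf]
  have nZ: "normal_in G H Z" using hypercentral_in_normal_in[OF Z] .
  show "F_central F (G\<lparr>carrier := H\<rparr>) A B"
  proof (cases "A \<inter> Z \<subseteq> B")
    case False
    then show ?thesis using F_central_if_not_below[OF her H Z cf] by blast
  next
    case True
    have "Z \<subseteq> B <#> Z"
      using subset_set_mult_right[OF normal_in_one[OF B] subgroup.subset[OF normal_in_subgroup[OF nZ]]] .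
    moreover have "A <#> Z \<subseteq> T" using set_mult_subset_subgroup[OF normal_in_subgroup[OF T(1)] AT T(2)] .
    ultimately have central: "F_central F (G\<lparr>carrier := H\<rparr>) (A <#> Z) (B <#> Z)"
      using above chief_factor_in_set_mult[OF H cf nZ True] by blast
    have "A \<inter> (B <#> Z) = B <#> (A \<inter> Z)"
      using dedekind_law_left[OF normal_in_subgroup[OF A] normal_in_subgroup[OF B] normal_in_subgroup[OF nZ] BA] .
    also have "\<dots> = B"
      using set_mult_subgroup_absorb[OF normal_in_subgroup[OF B] True] normal_in_one[OF A] normal_in_one[OF nZ]
      by blast
    finally have YA: "(B <#> Z) \<inter> A \<subseteq> B" by blast
    have "A \<subseteq> A <#> Z"
      using subset_set_mult_left[OF subgroup.subset[OF normal_in_subgroup[OF A]] normal_in_one[OF nZ]] .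
    then have "(A <#> Z) \<inter> A = A" by blast
    moreover have "A \<subseteq> A <#> B" using set_mult_subgroup_absorb[OF normal_in_subgroup[OF A] BA normal_in_one[OF B]]
      by simp
    ultimately have AW: "A \<subseteq> ((A <#> Z) \<inter> A) <#> B" by simp
    show ?thesis
      using F_central_transfer_subgroup[OF her H H subset_refl normal_in_set_mult[OF H A nZ]
          normal_in_set_mult[OF H B nZ] mono_set_mult[OF BA subset_refl] A B BA YA AW central] .
  qed
qed

lemma hypercentral_in_set_mult:
  assumes her: "hereditary_formation F" and H: "subgroup H G"
    and N1: "hypercentral_in F G H N1" and N2: "hypercentral_in F G H N2"
  shows "hypercentral_in F G H (N1 <#> N2)"
proof -
  note n1 = hypercentral_in_normal_in[OF N1] and n2 = hypercentral_in_normal_in[OF N2]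
  show ?thesis
  proof (rule hypercentral_in_extend[OF her H N1 normal_in_set_mult[OF H n1 n2]])
    show "N1 \<subseteq> N1 <#> N2"
      using subset_set_mult_left[OF subgroup.subset[OF normal_in_subgroup[OF n1]] normal_in_one[OF n2]] .
    fix A B assume cf: "chief_factor_in G H A B" and N1B: "N1 \<subseteq> B" and AN: "A \<subseteq> N1 <#> N2"
    note A = chief_factor_inD(1)[OF cf] and B = chief_factor_inD(2)[OF cf] and BA = chief_factor_inD(3)[OF cf]
    have "\<not> A \<inter> N2 \<subseteq> B"
    proof
      assume AN2: "A \<inter> N2 \<subseteq> B"
      have "A = A \<inter> (N1 <#> N2)" using AN by blast
      also have "\<dots> = N1 <#> (A \<inter> N2)"
        using dedekind_law_left[OF normal_in_subgroup[OF A] normal_in_subgroup[OF n1] normal_in_subgroup[OF n2]]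
          N1B BA by blast
      also have "\<dots> \<subseteq> B" using set_mult_subset_subgroup[OF normal_in_subgroup[OF B] N1B AN2] .
      finally show False using chief_factor_inD(3,4)[OF cf] by blast
    qed
    then show "F_central F (G\<lparr>carrier := H\<rparr>) A B" using F_central_if_not_below[OF her H N2 cf] by blast
  qed
qed

lemma hypercentral_in_greatest:
  assumes her: "hereditary_formation F" and fin: "finite (carrier G)" and H: "subgroup H G"
  obtains Z where "hypercentral_in F G H Z" "\<And>M. hypercentral_in F G H M \<Longrightarrow> M \<subseteq> Z"
proof -
  let ?S = "{N. hypercentral_in F G H N}"
  have "?S \<subseteq> Pow (carrier G)" using normal_in_mem_carrier hypercentral_in_normal_in by blast
  then have "finite ?S" using finite_subset fin by blast
  moreover have "{\<one>} \<in> ?S" using hypercentral_in_trivial[OF H] by blast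
  ultimately obtain Z where Z: "Z \<in> ?S" and max: "\<forall>M\<in>?S. Z \<subseteq> M \<longrightarrow> Z = M"
    using finite_has_maximal[of ?S] by blast
  have "M \<subseteq> Z" if M: "hypercentral_in F G H M" for M
  proof -
    have nZ: "normal_in G H Z" and nM: "normal_in G H M" using Z M hypercentral_in_normal_in by auto
    have "Z \<subseteq> Z <#> M"
      using subset_set_mult_left[OF subgroup.subset[OF normal_in_subgroup[OF nZ]] normal_in_one[OF nM]] .
    then have "Z = Z <#> M" using max hypercentral_in_set_mult[OF her H _ M] Z by blast
    moreover have "M \<subseteq> Z <#> M"
      using subset_set_mult_right[OF normal_in_one[OF nZ] subgroup.subset[OF normal_in_subgroup[OF nM]]] .
    ultimately show ?thesis by blast
  qed
  with Z that show thesis by blast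
qed

lemma F_hypercenter_eq:
  assumes H: "subgroup H G" and "hypercentral_in F G H Z" "\<And>M. hypercentral_in F G H M \<Longrightarrow> M \<subseteq> Z"
  shows "F_hypercenter F (G\<lparr>carrier := H\<rparr>) = Z"
  unfolding F_hypercenter_def F_hypercentral_iff[OF H] by (rule Greatest_equality) (use assms(2,3) in auto)

lemma hypercentral_in_F_hypercenter:
  "hereditary_formation F \<Longrightarrow> finite (carrier G) \<Longrightarrow> subgroup H G
    \<Longrightarrow> hypercentral_in F G H (F_hypercenter F (G\<lparr>carrier := H\<rparr>))"
  by (metis F_hypercenter_eq hypercentral_in_greatest)

lemma hypercentral_in_subset_F_hypercenter:
  "hereditary_formation F \<Longrightarrow> finite (carrier G) \<Longrightarrow> subgroup H G \<Longrightarrow> hypercentral_in F G H M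
    \<Longrightarrow> M \<subseteq> F_hypercenter F (G\<lparr>carrier := H\<rparr>)"
  by (metis F_hypercenter_eq hypercentral_in_greatest)

lemma central_subset_F_hypercenter:
  assumes her: "hereditary_formation F" and nil: "contains_nilpotent F" and fin: "finite (carrier G)"
    and H: "subgroup H G" and T: "normal_in G H T" and ZT: "F_hypercenter F (G\<lparr>carrier := H\<rparr>) \<subseteq> T"
    and central: "\<And>t h. t \<in> T \<Longrightarrow> h \<in> H \<Longrightarrow> t \<otimes> h \<otimes> inv t \<otimes> inv h \<in> F_hypercenter F (G\<lparr>carrier := H\<rparr>)"
  shows "T \<subseteq> F_hypercenter F (G\<lparr>carrier := H\<rparr>)"
proof -
  have "formation F" using her unfolding hereditary_formation_def by blast
  have "hypercentral_in F G H T"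
  proof (rule hypercentral_in_extend[OF her H hypercentral_in_F_hypercenter[OF her fin H] T ZT])
    fix A B assume cf: "chief_factor_in G H A B" and "F_hypercenter F (G\<lparr>carrier := H\<rparr>) \<subseteq> B" "A \<subseteq> T"
    then show "F_central F (G\<lparr>carrier := H\<rparr>) A B"
      using F_central_if_central[OF \<open>formation F\<close> nil fin H cf] central by blast
  qed
  then show ?thesis using hypercentral_in_subset_F_hypercenter[OF her fin H] by blast
qed

lemma hypercentral_in_Int_subgroup:
  assumes her: "hereditary_formation F" and fin: "finite (carrier G)"
    and H: "subgroup H G" and K: "subgroup K G" "K \<subseteq> H"
  shows "hypercentral_in F G H N \<Longrightarrow> hypercentral_in F G K (N \<inter> K)"
proof (induction "card N" arbitrary: N rule: less_induct)
  case less
  note N = hypercentral_in_normal_in[OF less.prems]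
  have NK: "normal_in G K (N \<inter> K)" using normal_in_Int_Int[OF N normal_in_self[OF K(1)]] K(2) by (simp add: Int_absorb1)
  show ?case
  proof (cases "N \<subseteq> {\<one>}")
    case True
    then show ?thesis unfolding hypercentral_in_def using NK chief_factor_in_nontrivial by blast
  next
    case False
    obtain L where NL: "chief_factor_in G H N L" using chief_factor_in_below[OF fin H N False] .
    note L = chief_factor_inD(2)[OF NL] and LN = chief_factor_inD(3,4)[OF NL]
    have "finite N" using finite_subset[OF _ fin] normal_in_mem_carrier[OF N] by blast
    then have "card L < card N" using LN by (simp add: psubset_card_mono)
    then have IH: "hypercentral_in F G K (L \<inter> K)"
      using less.hyps hypercentral_in_subset[OF less.prems L LN(1)] by blast
    have central: "F_central F (G\<lparr>carrier := H\<rparr>) N L" using less.prems NL unfolding hypercentral_in_def by blast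
    show ?thesis unfolding hypercentral_in_def
    proof (intro conjI allI impI)
      show "normal_in G K (N \<inter> K)" by (rule NK)
      fix A B assume "chief_factor_in G K A B \<and> A \<subseteq> N \<inter> K"
      then have cf: "chief_factor_in G K A B" and AN: "A \<subseteq> N \<inter> K" by auto
      note A = chief_factor_inD(1)[OF cf] and B = chief_factor_inD(2)[OF cf] and BA = chief_factor_inD(3)[OF cf]
      show "F_central F (G\<lparr>carrier := K\<rparr>) A B"
      proof (cases "A \<inter> (L \<inter> K) \<subseteq> B")
        case False
        then show ?thesis using F_central_if_not_below[OF her K(1) IH cf] by blast
      next
        case True
        then have "L \<inter> A \<subseteq> B" using AN by blast
        moreover have "A \<subseteq> (N \<inter> A) <#> B"
          using AN subset_set_mult_left[OF subgroup.subset[OF normal_in_subgroup[OF A]] normal_in_one[OF B]]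
          by (simp add: Int_absorb1)
        ultimately show ?thesis
          using F_central_transfer_subgroup[OF her H K N L LN(1) A B BA _ _ central] by blast
      qed
    qed
  qed
qed

lemma F_hypercenter_Int_subgroup:
  assumes "hereditary_formation F" "finite (carrier G)" "subgroup H G" "subgroup K G" "K \<subseteq> H"
  shows "F_hypercenter F (G\<lparr>carrier := H\<rparr>) \<inter> K \<subseteq> F_hypercenter F (G\<lparr>carrier := K\<rparr>)"
  using hypercentral_in_subset_F_hypercenter[OF assms(1,2,4)]
    hypercentral_in_Int_subgroup[OF assms hypercentral_in_F_hypercenter[OF assms(1-3)]] .

end

section \<open>Products of lists\<close>

definition mult_list :: "('a, 'b) monoid_scheme \<Rightarrow> 'a list \<Rightarrow> 'a" where
  "mult_list G xs = foldr (\<otimes>\<^bsub>G\<^esub>) xs \<one>\<^bsub>G\<^esub>"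

lemma mult_list_Nil [simp]: "mult_list G [] = \<one>\<^bsub>G\<^esub>"
  by (simp add: mult_list_def)

lemma mult_list_Cons [simp]: "mult_list G (x # xs) = x \<otimes>\<^bsub>G\<^esub> mult_list G xs"
  by (simp add: mult_list_def)

lemma set_prod_list_Nil [simp]: "set_prod_list G [] = {\<one>\<^bsub>G\<^esub>}"
  by (simp add: set_prod_list_def)

lemma set_prod_list_Cons [simp]: "set_prod_list G (A # As) = A <#>\<^bsub>G\<^esub> set_prod_list G As"
  by (simp add: set_prod_list_def)

lemma mem_set_prod_list_iff:
  "distinct l \<Longrightarrow> w \<in> set_prod_list G (map A l) \<longleftrightarrow> (\<exists>r. (\<forall>k\<in>set l. r k \<in> A k) \<and> w = mult_list G (map r l))"
proof (induction l arbitrary: w)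
  case (Cons k l)
  show ?case
  proof
    assume "w \<in> set_prod_list G (map A (k # l))"
    then obtain a p where a: "a \<in> A k" and "p \<in> set_prod_list G (map A l)" and w: "w = a \<otimes>\<^bsub>G\<^esub> p"
      unfolding list.map set_prod_list_Cons set_mult_mem_iff by blast
    then obtain r where r: "\<forall>j\<in>set l. r j \<in> A j" "p = mult_list G (map r l)" using Cons by auto
    have "k \<notin> set l" using Cons.prems by simp
    then have eq: "map (r(k := a)) l = map r l" by (intro map_cong) auto
    have "w = mult_list G (map (r(k := a)) (k # l))" using w r(2) by (simp add: eq)
    moreover have "\<forall>j\<in>set (k # l). (r(k := a)) j \<in> A j" using r a by auto
    ultimately show "\<exists>r. (\<forall>k\<in>set (k # l). r k \<in> A k) \<and> w = mult_list G (map r (k # l))" by blast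
  next
    assume "\<exists>r. (\<forall>j\<in>set (k # l). r j \<in> A j) \<and> w = mult_list G (map r (k # l))"
    then obtain r where "\<forall>j\<in>set (k # l). r j \<in> A j" "w = mult_list G (map r (k # l))" by blast
    then show "w \<in> set_prod_list G (map A (k # l))" using Cons by (auto intro: set_mult_memI)
  qed
qed simp

lemma set_prod_list_subset:
  assumes "\<one>\<^bsub>G\<^esub> \<in> S" "\<And>x y. x \<in> S \<Longrightarrow> y \<in> S \<Longrightarrow> x \<otimes>\<^bsub>G\<^esub> y \<in> S" "\<forall>A\<in>set As. A \<subseteq> S"
  shows "set_prod_list G As \<subseteq> S"
  using assms(3) by (induction As) (use assms(1,2) in \<open>auto simp: set_mult_def\<close>)

context group begin

lemma mult_list_closed: "set xs \<subseteq> carrier G \<Longrightarrow> mult_list G xs \<in> carrier G"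
  by (induction xs) auto

lemma one_mem_set_prod_list: "\<forall>A\<in>set As. \<one> \<in> A \<Longrightarrow> \<one> \<in> set_prod_list G As"
proof (induction As)
  case (Cons A As)
  then show ?case using set_mult_memI[of \<one> A \<one> "set_prod_list G As" G] by simp
qed simp

lemma subset_set_prod_list:
  assumes "\<forall>A\<in>set As. \<one> \<in> A \<and> A \<subseteq> carrier G" "A \<in> set As"
  shows "A \<subseteq> set_prod_list G As"
  using assms
proof (induction As)
  case (Cons A' As)
  have one: "\<one> \<in> set_prod_list G As" using one_mem_set_prod_list Cons.prems(1) by auto
  have carrier: "set_prod_list G As \<subseteq> carrier G"
    using set_prod_list_subset[where S = "carrier G" and G = G] Cons.prems(1) by auto
  show ?case
  proof (cases "A = A'")
    case True
    then show ?thesis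
      using subset_set_mult_left[of A' "set_prod_list G As"] one Cons.prems(1) by simp
  next
    case False
    then have "A \<subseteq> set_prod_list G As" using Cons by simp
    then show ?thesis
      using subset_set_mult_right[OF _ carrier, of A'] Cons.prems(1) by auto
  qed
qed simp

lemma mult_list_commute:
  assumes x: "x \<in> carrier G" and "\<forall>y\<in>set ys. y \<in> carrier G \<and> x \<otimes> y = y \<otimes> x"
  shows "x \<otimes> mult_list G ys = mult_list G ys \<otimes> x"
  using assms(2)
proof (induction ys)
  case (Cons y ys)
  then have y: "y \<in> carrier G" "x \<otimes> y = y \<otimes> x" and ys: "set ys \<subseteq> carrier G"
    and IH: "x \<otimes> mult_list G ys = mult_list G ys \<otimes> x" by auto
  have "x \<otimes> mult_list G (y # ys) = (x \<otimes> y) \<otimes> mult_list G ys"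
    using x y(1) mult_list_closed[OF ys] by (simp add: m_assoc)
  also have "\<dots> = y \<otimes> (x \<otimes> mult_list G ys)"
    using x y mult_list_closed[OF ys] by (simp add: m_assoc)
  also have "\<dots> = mult_list G (y # ys) \<otimes> x"
    using x y(1) mult_list_closed[OF ys] IH by (simp add: m_assoc)
  finally show ?case .
qed (use x in simp)

lemma mult_list_map_mult:
  assumes "distinct l" "\<And>k. k \<in> set l \<Longrightarrow> a k \<in> carrier G" "\<And>k. k \<in> set l \<Longrightarrow> b k \<in> carrier G"
    "\<And>j k. j \<in> set l \<Longrightarrow> k \<in> set l \<Longrightarrow> j \<noteq> k \<Longrightarrow> b j \<otimes> a k = a k \<otimes> b j"
  shows "mult_list G (map (\<lambda>k. a k \<otimes> b k) l) = mult_list G (map a l) \<otimes> mult_list G (map b l)"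
  using assms
proof (induction l)
  case (Cons k l)
  have ca: "set (map a l) \<subseteq> carrier G" and cb: "set (map b l) \<subseteq> carrier G"
    and ak: "a k \<in> carrier G" "b k \<in> carrier G" using Cons.prems by auto
  have "\<forall>y\<in>set (map a l). y \<in> carrier G \<and> b k \<otimes> y = y \<otimes> b k"
    using Cons.prems by auto
  then have comm: "b k \<otimes> mult_list G (map a l) = mult_list G (map a l) \<otimes> b k"
    using mult_list_commute[OF ak(2)] by blast
  have "mult_list G (map (\<lambda>k. a k \<otimes> b k) (k # l))
      = a k \<otimes> (b k \<otimes> mult_list G (map a l)) \<otimes> mult_list G (map b l)"
    using Cons ak mult_list_closed[OF ca] mult_list_closed[OF cb] by (simp add: m_assoc)
  also have "\<dots> = mult_list G (map a (k # l)) \<otimes> mult_list G (map b (k # l))"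
    unfolding comm using ak mult_list_closed[OF ca] mult_list_closed[OF cb] by (simp add: m_assoc)
  finally show ?case .
qed simp

lemma mult_list_extract:
  assumes "distinct l" "i \<in> set l" "\<And>k. k \<in> set l \<Longrightarrow> a k \<in> carrier G"
    "\<And>j. j \<in> set l \<Longrightarrow> j \<noteq> i \<Longrightarrow> a i \<otimes> a j = a j \<otimes> a i"
  shows "mult_list G (map a l) = a i \<otimes> mult_list G (map a (filter (\<lambda>j. j \<noteq> i) l))"
  using assms
proof (induction l)
  case (Cons k l)
  show ?case
  proof (cases "k = i")
    case True
    then have "filter (\<lambda>j. j \<noteq> i) l = l" using Cons.prems(1) by (auto intro: filter_True)
    then show ?thesis using True by simp
  next
    case False
    then have i: "i \<in> set l" using Cons.prems(2) by simp
    have c: "set (map a (filter (\<lambda>j. j \<noteq> i) l)) \<subseteq> carrier G" and ai: "a i \<in> carrier G" "a k \<in> carrier G"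
      using Cons.prems i by auto
    have "mult_list G (map a (k # l)) = (a k \<otimes> a i) \<otimes> mult_list G (map a (filter (\<lambda>j. j \<noteq> i) l))"
      using Cons i ai mult_list_closed[OF c] by (simp add: m_assoc)
    also have "\<dots> = (a i \<otimes> a k) \<otimes> mult_list G (map a (filter (\<lambda>j. j \<noteq> i) l))"
      using Cons.prems(4)[of k] False by simp
    also have "\<dots> = a i \<otimes> mult_list G (map a (filter (\<lambda>j. j \<noteq> i) (k # l)))"
      using False ai mult_list_closed[OF c] by (simp add: m_assoc)
    finally show ?thesis .
  qed
qed simp

end

lemma (in group_hom) hom_mult_list: "set xs \<subseteq> carrier G \<Longrightarrow> h (mult_list G xs) = mult_list H (map h xs)"
  by (induction xs) (simp_all add: G.mult_list_closed)

section \<open>Products of subgroups with hypercentral commutators\<close>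

locale hypercentral_product = group G for G (structure) +
  fixes F :: "nat monoid \<Rightarrow> bool" and Gs :: "nat \<Rightarrow> 'a set" and n :: nat
  assumes hereditary: "hereditary_formation F" and nilpotent: "contains_nilpotent F"
    and finite_carrier: "finite (carrier G)"
    and subgroup_factor: "\<And>i. i < n \<Longrightarrow> subgroup (Gs i) G"
    and carrier_eq: "carrier G = set_prod_list G (map Gs [0..<n])"
    and commutator_subset: "\<And>i. i < n \<Longrightarrow>
      comm_subgroup G (Gs i) (set_prod_list G (map Gs (filter (\<lambda>j. j \<noteq> i) [0..<n]))) \<subseteq> F_hypercenter F G"
begin

abbreviation "Z \<equiv> F_hypercenter F G"

abbreviation Z_factor :: "nat \<Rightarrow> 'a set" where
  "Z_factor i \<equiv> F_hypercenter F (G\<lparr>carrier := Gs i\<rparr>)"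

lemma factor_subset: "i < n \<Longrightarrow> Gs i \<subseteq> carrier G"
  using subgroup.subset[OF subgroup_factor] .

lemma carrier_subset_closure:
  assumes "\<one> \<in> S" "\<And>x y. x \<in> S \<Longrightarrow> y \<in> S \<Longrightarrow> x \<otimes> y \<in> S" "\<And>j. j < n \<Longrightarrow> Gs j \<subseteq> S"
  shows "carrier G \<subseteq> S"
  unfolding carrier_eq by (rule set_prod_list_subset) (use assms in auto)

lemma normal_in_if_factors_normalize:
  assumes N: "subgroup N G" and conj: "\<And>j g x. j < n \<Longrightarrow> g \<in> Gs j \<Longrightarrow> x \<in> N \<Longrightarrow> g \<otimes> x \<otimes> inv g \<in> N"
  shows "normal_in G (carrier G) N"
proof -
  let ?S = "{g \<in> carrier G. \<forall>x\<in>N. g \<otimes> x \<otimes> inv g \<in> N}"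
  have "carrier G \<subseteq> ?S"
  proof (rule carrier_subset_closure)
    show "\<one> \<in> ?S" using subgroup.mem_carrier[OF N] by simp
    show "Gs j \<subseteq> ?S" if "j < n" for j using conj[OF that] factor_subset[OF that] by blast
    fix g h assume g: "g \<in> ?S" and h: "h \<in> ?S"
    have "g \<otimes> h \<otimes> x \<otimes> inv (g \<otimes> h) = g \<otimes> (h \<otimes> x \<otimes> inv h) \<otimes> inv g" if "x \<in> N" for x
      using g h subgroup.mem_carrier[OF N that] by (simp add: m_assoc inv_mult_group)
    then show "g \<otimes> h \<in> ?S" using g h by auto
  qed
  then show ?thesis unfolding normal_in_def using N subgroup.subset[OF N] by blast
qed

lemma hypercentral_Z: "hypercentral_in F G (carrier G) Z"
  using hypercentral_in_F_hypercenter[OF hereditary finite_carrier subgroup_self] by simp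

lemma normal_in_Z: "normal_in G (carrier G) Z"
  using hypercentral_in_normal_in[OF hypercentral_Z] .

lemma Z_normal: "Z \<lhd> G"
  using normal_in_iff[OF subgroup_self] normal_in_Z by simp

lemma coset_hom: "group_hom G (G Mod Z) (\<lambda>x. Z #> x)"
  using normal.r_coset_hom_Mod[OF Z_normal] normal.factorgroup_is_group[OF Z_normal] is_group
  by (simp add: group_hom_def group_hom_axioms_def)

lemma commutator_mem_Z:
  assumes "i < n" "a \<in> Gs i" "b \<in> set_prod_list G (map Gs (filter (\<lambda>j. j \<noteq> i) [0..<n]))"
  shows "a \<otimes> b \<otimes> inv a \<otimes> inv b \<in> Z"
  using commutator_subset[OF assms(1)] assms(2,3) unfolding comm_subgroup_def by (blast intro: generate.incl)

lemma commutator_factors_mem_Z: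
  assumes "i < n" "j < n" "i \<noteq> j" "a \<in> Gs i" "b \<in> Gs j"
  shows "a \<otimes> b \<otimes> inv a \<otimes> inv b \<in> Z"
proof -
  have "Gs j \<subseteq> set_prod_list G (map Gs (filter (\<lambda>k. k \<noteq> i) [0..<n]))"
    using subset_set_prod_list subgroup.one_closed[OF subgroup_factor] factor_subset assms(2,3) by auto
  then show ?thesis using commutator_mem_Z assms by blast
qed

lemma coset_commute_factors:
  assumes "i < n" "j < n" "i \<noteq> j" "a \<in> Gs i" "b \<in> Gs j"
  shows "(Z #> a) <#> (Z #> b) = (Z #> b) <#> (Z #> a)"
  using normal.rcos_commute_iff[OF Z_normal] commutator_factors_mem_Z[OF assms] factor_subset assms by blast

lemma coset_mult_list:
  assumes "\<And>k. k \<in> set l \<Longrightarrow> r k \<in> carrier G"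
  shows "Z #> mult_list G (map r l) = mult_list (G Mod Z) (map (\<lambda>k. Z #> r k) l)"
proof -
  have "set (map r l) \<subseteq> carrier G" using assms by auto
  from group_hom.hom_mult_list[OF coset_hom this] show ?thesis by (simp add: comp_def)
qed

lemma factor_Int_Z_subset: "i < n \<Longrightarrow> Gs i \<inter> Z \<subseteq> F_hypercenter F (G\<lparr>carrier := Gs i\<rparr>)"
  using F_hypercenter_Int_subgroup[OF hereditary finite_carrier subgroup_self subgroup_factor factor_subset]
  by (simp add: Int_commute)

lemma hypercentral_Z_factor: "i < n \<Longrightarrow> hypercentral_in F G (Gs i) (Z_factor i)"
  using hypercentral_in_F_hypercenter[OF hereditary finite_carrier subgroup_factor] .

lemma normal_in_Z_factor: "i < n \<Longrightarrow> normal_in G (Gs i) (Z_factor i)"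
  using hypercentral_in_normal_in[OF hypercentral_Z_factor] .

lemma commutator_Z_factor_mem_Z:
  assumes i: "i < n" and j: "j < n" "j \<noteq> i" and g: "g \<in> Gs j" and t: "t \<in> Z_factor i <#> Z"
  shows "g \<otimes> t \<otimes> inv g \<otimes> inv t \<in> Z"
proof -
  obtain z w where z: "z \<in> Z_factor i" and w: "w \<in> Z" and t: "t = z \<otimes> w"
    using t unfolding set_mult_mem_iff by blast
  have zi: "z \<in> Gs i" using normal_in_subset[OF normal_in_Z_factor[OF i]] z by blast
  have carr: "g \<in> carrier G" "z \<in> carrier G" "w \<in> carrier G"
    using factor_subset[OF j(1)] g factor_subset[OF i] zi normal_in_mem_carrier[OF normal_in_Z w] by auto
  have "g \<otimes> z \<otimes> inv g \<otimes> inv z \<in> Z" using commutator_factors_mem_Z[OF j(1) i j(2) g zi] .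
  moreover have "z \<otimes> (g \<otimes> w \<otimes> inv g \<otimes> inv w) \<otimes> inv z \<in> Z"
    using normal_in_conj[OF normal_in_Z carr(2) normal_in_m_closed[OF normal_in_Z
          normal_in_conj[OF normal_in_Z carr(1) w] normal_in_inv_closed[OF normal_in_Z w]]] .
  moreover have "g \<otimes> t \<otimes> inv g \<otimes> inv t
      = (g \<otimes> z \<otimes> inv g \<otimes> inv z) \<otimes> (z \<otimes> (g \<otimes> w \<otimes> inv g \<otimes> inv w) \<otimes> inv z)"
    unfolding t using carr by (simp add: m_assoc inv_mult_group)
  ultimately show ?thesis using normal_in_m_closed[OF normal_in_Z] by simp
qed

lemma normal_in_Z_factor_set_mult:
  assumes i: "i < n"
  shows "normal_in G (carrier G) (Z_factor i <#> Z)"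
proof (rule normal_in_if_factors_normalize)
  have Zi: "normal_in G (Gs i) (Z_factor i)" using normal_in_Z_factor[OF i] .
  have Zi_sub: "Z_factor i \<subseteq> carrier G" using normal_in_subset[OF Zi] factor_subset[OF i] by blast
  show T: "subgroup (Z_factor i <#> Z) G"
    using subgroup_set_mult_normal_in[OF subgroup_self normal_in_subgroup[OF Zi] Zi_sub normal_in_Z] .
  fix j g t assume j: "j < n" and g: "g \<in> Gs j" and t: "t \<in> Z_factor i <#> Z"
  have gc: "g \<in> carrier G" and tc: "t \<in> carrier G"
    using factor_subset[OF j] g subgroup.mem_carrier[OF T t] by auto
  show "g \<otimes> t \<otimes> inv g \<in> Z_factor i <#> Z"
  proof (cases "j = i")
    case True
    obtain z w where z: "z \<in> Z_factor i" and w: "w \<in> Z" and t: "t = z \<otimes> w"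
      using t unfolding set_mult_mem_iff by blast
    have "g \<otimes> t \<otimes> inv g = (g \<otimes> z \<otimes> inv g) \<otimes> (g \<otimes> w \<otimes> inv g)"
      unfolding t using gc normal_in_mem_carrier[OF Zi z] normal_in_mem_carrier[OF normal_in_Z w]
      by (simp add: m_assoc)
    then show ?thesis
      using normal_in_conj[OF Zi _ z] normal_in_conj[OF normal_in_Z gc w] g True set_mult_memI by metis
  next
    case False
    have "Z \<subseteq> Z_factor i <#> Z"
      using subset_set_mult_right[OF normal_in_one[OF Zi] normal_in_subset[OF normal_in_Z]] .
    then have "(g \<otimes> t \<otimes> inv g \<otimes> inv t) \<otimes> t \<in> Z_factor i <#> Z"
      using subgroup.m_closed[OF T _ t] commutator_Z_factor_mem_Z[OF i j False g t] by blast
    then show ?thesis using gc tc by (simp add: m_assoc)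
  qed
qed

lemma carrier_subset_centralizer_in_factor:
  assumes i: "i < n" and cf: "chief_factor_in G (carrier G) A B"
    and ZB: "Z \<subseteq> B" and AT: "A \<subseteq> Z_factor i <#> Z"
  shows "carrier G \<subseteq> centralizer_in G (carrier G) A B <#> Gs i"
proof -
  let ?C = "centralizer_in G (carrier G) A B"
  have C: "normal_in G (carrier G) ?C"
    using normal_in_centralizer_in[OF subgroup_self chief_factor_inD(1,2)[OF cf]] .
  have "?C \<lhd> G" using normal_in_iff[OF subgroup_self] C by simp
  then have eq: "Gs i <#> ?C = ?C <#> Gs i" using commut_normal[OF subgroup_factor[OF i]] by simp
  have S: "subgroup (Gs i <#> ?C) G"
    using subgroup_set_mult_normal_in[OF subgroup_self subgroup_factor[OF i] factor_subset[OF i] C] .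
  have "carrier G \<subseteq> Gs i <#> ?C"
  proof (rule carrier_subset_closure)
    show "\<one> \<in> Gs i <#> ?C" using subgroup.one_closed[OF S] .
    show "x \<otimes> y \<in> Gs i <#> ?C" if "x \<in> Gs i <#> ?C" "y \<in> Gs i <#> ?C" for x y
      using subgroup.m_closed[OF S that] .
    fix j assume j: "j < n"
    show "Gs j \<subseteq> Gs i <#> ?C"
    proof (cases "j = i")
      case True
      then show ?thesis using subset_set_mult_left[OF factor_subset[OF i] normal_in_one[OF C]] by simp
    next
      case False
      have "Gs j \<subseteq> ?C"
      proof
        fix g assume g: "g \<in> Gs j"
        have "g \<otimes> a \<otimes> inv g \<otimes> inv a \<in> B" if "a \<in> A" for a
          using commutator_Z_factor_mem_Z[OF i j False g] AT ZB that by blast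
        then show "g \<in> ?C" unfolding mem_centralizer_in_iff using g factor_subset[OF j] by blast
      qed
      then show ?thesis using subset_set_mult_right[OF subgroup.one_closed[OF subgroup_factor[OF i]]]
          normal_in_subset[OF C] by blast
    qed
  qed
  then show ?thesis using eq by simp
qed

lemma Z_factor_subset_Z:
  assumes i: "i < n"
  shows "Z_factor i \<subseteq> Z"
proof -
  let ?T = "Z_factor i <#> Z"
  have Zi: "normal_in G (Gs i) (Z_factor i)" using normal_in_Z_factor[OF i] .
  have Zi_sub: "Z_factor i \<subseteq> carrier G" using normal_in_subset[OF Zi] factor_subset[OF i] by blast
  have ZT: "Z \<subseteq> ?T" using subset_set_mult_right[OF normal_in_one[OF Zi] normal_in_subset[OF normal_in_Z]] .
  have "hypercentral_in F G (carrier G) ?T"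
  proof (rule hypercentral_in_extend[OF hereditary subgroup_self hypercentral_Z normal_in_Z_factor_set_mult[OF i] ZT])
    fix A B assume cf: "chief_factor_in G (carrier G) A B" and ZB: "Z \<subseteq> B" and AT: "A \<subseteq> ?T"
    note A = chief_factor_inD(1)[OF cf] and B = chief_factor_inD(2)[OF cf] and BA = chief_factor_inD(3)[OF cf]
    have "A = A \<inter> ?T" using AT by blast
    also have "\<dots> = (A \<inter> Z_factor i) <#> Z"
      using dedekind_law_right[OF normal_in_subgroup[OF A] normal_in_subgroup[OF Zi]
          normal_in_subgroup[OF normal_in_Z]] ZB BA by blast
    also have "\<dots> \<subseteq> (A \<inter> Z_factor i) <#> B" using ZB by (rule mono_set_mult[OF subset_refl])
    finally have AW: "A \<subseteq> (A \<inter> Z_factor i) <#> B" .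
    have HC: "carrier G \<subseteq> centralizer_in G (carrier G) A B <#> Gs i"
      using carrier_subset_centralizer_in_factor[OF i cf ZB AT] .
    have cfi: "chief_factor_in G (Gs i) (A \<inter> Z_factor i) (B \<inter> Z_factor i)"
      using chief_factor_in_restrict[OF subgroup_self subgroup_factor[OF i] factor_subset[OF i] cf Zi AW HC] .
    have "F_central F (G\<lparr>carrier := Gs i\<rparr>) (A \<inter> Z_factor i) (B \<inter> Z_factor i)"
      using hypercentral_Z_factor[OF i] cfi unfolding hypercentral_in_def by blast
    moreover have "A \<subseteq> (A \<inter> Z_factor i \<inter> A) <#> B" using AW by (simp add: Int_absorb2 inf_commute)
    moreover have "carrier G \<subseteq> centralizer_in G (carrier G) A B <#> (Gs i \<inter> carrier G)"
      using HC factor_subset[OF i] by (simp add: Int_absorb2)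
    ultimately show "F_central F (G\<lparr>carrier := carrier G\<rparr>) A B"
      using F_central_transfer[OF hereditary subgroup_factor[OF i] subgroup_self
          chief_factor_inD(1,2,3)[OF cfi] A B BA] by blast
  qed
  then have "?T \<subseteq> Z"
    using hypercentral_in_subset_F_hypercenter[OF hereditary finite_carrier subgroup_self] by simp
  moreover have "Z_factor i \<subseteq> ?T"
    using subset_set_mult_left[OF Zi_sub normal_in_one[OF normal_in_Z]] .
  ultimately show ?thesis by blast
qed

lemma Z_factor_eq: "i < n \<Longrightarrow> Z_factor i = Gs i \<inter> Z"
  using Z_factor_subset_Z factor_Int_Z_subset normal_in_subset[OF normal_in_Z_factor] by blast

lemma mem_Z_if_coset_central:
  assumes x: "x \<in> carrier G"
    and central: "\<And>j g. j < n \<Longrightarrow> g \<in> Gs j \<Longrightarrow> (Z #> x) <#> (Z #> g) = (Z #> g) <#> (Z #> x)"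
  shows "x \<in> Z"
proof -
  let ?T = "{x \<in> carrier G. \<forall>y\<in>carrier G. (Z #> x) <#> (Z #> y) = (Z #> y) <#> (Z #> x)}"
  have "carrier G \<subseteq> {g \<in> carrier G. x \<otimes> g \<otimes> inv x \<otimes> inv g \<in> Z}"
  proof (rule carrier_subset_closure)
    show "\<one> \<in> {g \<in> carrier G. x \<otimes> g \<otimes> inv x \<otimes> inv g \<in> Z}" using x normal_in_one[OF normal_in_Z] by simp
    show "Gs j \<subseteq> {g \<in> carrier G. x \<otimes> g \<otimes> inv x \<otimes> inv g \<in> Z}" if "j < n" for j
      using normal.rcos_commute_iff[OF Z_normal x] central[OF that] factor_subset[OF that] by blast
    fix g h assume "g \<in> {g \<in> carrier G. x \<otimes> g \<otimes> inv x \<otimes> inv g \<in> Z}" "h \<in> {g \<in> carrier G. x \<otimes> g \<otimes> inv x \<otimes> inv g \<in> Z}"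
    then have g: "g \<in> carrier G" "x \<otimes> g \<otimes> inv x \<otimes> inv g \<in> Z" and h: "h \<in> carrier G" "x \<otimes> h \<otimes> inv x \<otimes> inv h \<in> Z"
      by auto
    have "x \<otimes> (g \<otimes> h) \<otimes> inv x \<otimes> inv (g \<otimes> h)
        = (x \<otimes> g \<otimes> inv x \<otimes> inv g) \<otimes> (g \<otimes> (x \<otimes> h \<otimes> inv x \<otimes> inv h) \<otimes> inv g)"
      using x g(1) h(1) by (simp add: m_assoc inv_mult_group)
    then show "g \<otimes> h \<in> {g \<in> carrier G. x \<otimes> g \<otimes> inv x \<otimes> inv g \<in> Z}"
      using normal_in_m_closed[OF normal_in_Z g(2) normal_in_conj[OF normal_in_Z g(1) h(2)]] g(1) h(1) by simp
  qed
  then have "x \<in> ?T" using normal.rcos_commute_iff[OF Z_normal x] x by blast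
  have "normal_in G (carrier G) ?T" using group_hom.normal_in_preimage_center[OF coset_hom] by simp
  moreover have "Z \<subseteq> ?T"
  proof
    fix z assume z: "z \<in> Z"
    have zc: "z \<in> carrier G" using normal_in_mem_carrier[OF normal_in_Z z] .
    have "z \<otimes> y \<otimes> inv z \<otimes> inv y \<in> Z" if y: "y \<in> carrier G" for y
    proof -
      have "z \<otimes> y \<otimes> inv z \<otimes> inv y = z \<otimes> (y \<otimes> inv z \<otimes> inv y)" using zc y by (simp add: m_assoc)
      then show ?thesis
        using normal_in_m_closed[OF normal_in_Z z normal_in_conj[OF normal_in_Z y normal_in_inv_closed[OF normal_in_Z z]]]
        by simp
    qed
    then show "z \<in> ?T" using normal.rcos_commute_iff[OF Z_normal] zc by blast
  qed
  moreover have "t \<otimes> g \<otimes> inv t \<otimes> inv g \<in> Z" if "t \<in> ?T" "g \<in> carrier G" for t g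
    using normal.rcos_commute_iff[OF Z_normal] that by blast
  ultimately have "?T \<subseteq> Z"
    using central_subset_F_hypercenter[OF hereditary nilpotent finite_carrier subgroup_self, of ?T] by simp
  then show ?thesis using \<open>x \<in> ?T\<close> by blast
qed

lemma factors_mem_Z:
  assumes r: "\<And>k. k < n \<Longrightarrow> r k \<in> Gs k" and prod: "mult_list G (map r [0..<n]) \<in> Z" and i: "i < n"
  shows "r i \<in> Z"
proof -
  interpret \<pi>: group_hom G "G Mod Z" "\<lambda>x. Z #> x" by (rule coset_hom)
  let ?rest = "filter (\<lambda>j. j \<noteq> i) [0..<n]"
  let ?w = "mult_list G (map r ?rest)"
  have rc: "r k \<in> carrier G" if "k < n" for k using r[OF that] factor_subset[OF that] by blast
  have ac: "Z #> r k \<in> carrier (G Mod Z)" if "k < n" for k using \<pi>.hom_closed[OF rc[OF that]] .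
  have wc: "?w \<in> carrier G" by (rule mult_list_closed) (auto intro: rc)
  have w: "?w \<in> set_prod_list G (map Gs ?rest)" using mem_set_prod_list_iff[of ?rest ?w G Gs] r by auto
  have "\<one>\<^bsub>G Mod Z\<^esub> = Z #> mult_list G (map r [0..<n])"
    using coset_join2[OF normal_in_mem_carrier[OF normal_in_Z prod] normal_in_subgroup[OF normal_in_Z] prod] by simp
  also have "\<dots> = mult_list (G Mod Z) (map (\<lambda>k. Z #> r k) [0..<n])"
    using coset_mult_list[of "[0..<n]" r] rc by simp
  also have "\<dots> = (Z #> r i) \<otimes>\<^bsub>G Mod Z\<^esub> mult_list (G Mod Z) (map (\<lambda>k. Z #> r k) ?rest)"
    using \<pi>.H.mult_list_extract[of "[0..<n]" i "\<lambda>k. Z #> r k"] i ac coset_commute_factors r by auto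
  also have "\<dots> = (Z #> r i) \<otimes>\<^bsub>G Mod Z\<^esub> (Z #> ?w)" using coset_mult_list[of ?rest r] rc by simp
  finally have ri: "Z #> r i = inv\<^bsub>G Mod Z\<^esub> (Z #> ?w)"
    using \<pi>.H.inv_equality \<pi>.hom_closed[OF wc] ac[OF i] by metis
  show ?thesis
  proof (rule mem_Z_if_coset_central[OF rc[OF i]])
    fix j g assume j: "j < n" and g: "g \<in> Gs j"
    have gc: "g \<in> carrier G" using g factor_subset[OF j] by blast
    show "(Z #> r i) <#> (Z #> g) = (Z #> g) <#> (Z #> r i)"
    proof (cases "j = i")
      case True
      have "(Z #> g) \<otimes>\<^bsub>G Mod Z\<^esub> (Z #> ?w) = (Z #> ?w) \<otimes>\<^bsub>G Mod Z\<^esub> (Z #> g)"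
        using normal.rcos_commute_iff[OF Z_normal gc wc] commutator_mem_Z[OF i _ w] g True by simp
      then show ?thesis
        using \<pi>.H.commute_inv[OF \<pi>.hom_closed[OF gc] \<pi>.hom_closed[OF wc]] unfolding ri by simp
    next
      case False
      then show ?thesis using coset_commute_factors[OF i j _ r[OF i] g] by simp
    qed
  qed
qed

abbreviation factor_quotients :: "nat \<Rightarrow> 'a set monoid" where
  "factor_quotients i \<equiv> G\<lparr>carrier := Gs i\<rparr> Mod Z_factor i"

definition multiply_cosets :: "(nat \<Rightarrow> 'a set) \<Rightarrow> 'a set" where
  "multiply_cosets x = mult_list (G Mod Z) (map (\<lambda>k. Z <#> x k) [0..<n])"

lemma group_factor_quotients: "i < n \<Longrightarrow> group (factor_quotients i)"
  using normal.factorgroup_is_group normal_in_iff[OF subgroup_factor] normal_in_Z_factor by blast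

lemma group_product_quotients: "group (product_group {..<n} factor_quotients)"
  by (rule product_group) (simp add: group_factor_quotients)

lemma carrier_product_quotients:
  "x \<in> carrier (product_group {..<n} factor_quotients) \<longleftrightarrow>
     x \<in> extensional {..<n} \<and> (\<forall>k<n. \<exists>g\<in>Gs k. x k = Z_factor k #> g)"
  unfolding carrier_product_group PiE_iff carrier_FactGroup by auto

lemma product_quotients_representatives:
  assumes "x \<in> carrier (product_group {..<n} factor_quotients)"
  obtains r where "\<And>k. k < n \<Longrightarrow> r k \<in> Gs k" "\<And>k. k < n \<Longrightarrow> x k = Z_factor k #> r k"
  using assms unfolding carrier_product_quotients by metis

lemma multiply_cosets_eq:
  assumes r: "\<And>k. k < n \<Longrightarrow> r k \<in> Gs k" and x: "\<And>k. k < n \<Longrightarrow> x k = Z_factor k #> r k"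
  shows "multiply_cosets x = Z #> mult_list G (map r [0..<n])"
proof -
  interpret \<pi>: group_hom G "G Mod Z" "\<lambda>x. Z #> x" by (rule coset_hom)
  have rc: "r k \<in> carrier G" if "k < n" for k using r[OF that] factor_subset[OF that] by blast
  have "Z <#> x k = Z #> r k" if k: "k < n" for k
  proof -
    have "Z <#> x k = (Z <#> Z_factor k) #> r k"
      using x[OF k] setmult_rcos_assoc normal_in_subset[OF normal_in_Z] normal_in_subset[OF normal_in_Z_factor[OF k]]
        factor_subset[OF k] rc[OF k] by (metis subset_trans)
    then show ?thesis
      using set_mult_subgroup_absorb[OF normal_in_subgroup[OF normal_in_Z] Z_factor_subset_Z[OF k]
          normal_in_one[OF normal_in_Z_factor[OF k]]] by simp
  qed
  then have "multiply_cosets x = mult_list (G Mod Z) (map (\<lambda>k. Z #> r k) [0..<n])"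
    unfolding multiply_cosets_def by (intro arg_cong[where f = "mult_list (G Mod Z)"] map_cong) auto
  also have "\<dots> = Z #> mult_list G (map r [0..<n])"
  proof -
    have "set (map r [0..<n]) \<subseteq> carrier G" using rc by auto
    from \<pi>.hom_mult_list[OF this] show ?thesis by (simp add: comp_def)
  qed
  finally show ?thesis .
qed

lemma coset_mult_list_mult:
  assumes r: "\<And>k. k < n \<Longrightarrow> r k \<in> Gs k" and s: "\<And>k. k < n \<Longrightarrow> s k \<in> Gs k"
  shows "Z #> mult_list G (map (\<lambda>k. r k \<otimes> s k) [0..<n])
      = (Z #> mult_list G (map r [0..<n])) \<otimes>\<^bsub>G Mod Z\<^esub> (Z #> mult_list G (map s [0..<n]))"
proof -
  interpret Q: group "G Mod Z" using normal.factorgroup_is_group[OF Z_normal] .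
  have rc: "r k \<in> carrier G" "s k \<in> carrier G" if "k < n" for k
    using r s factor_subset that by blast+
  have "Z #> mult_list G (map (\<lambda>k. r k \<otimes> s k) [0..<n])
      = mult_list (G Mod Z) (map (\<lambda>k. Z #> (r k \<otimes> s k)) [0..<n])"
    by (rule coset_mult_list) (use rc in auto)
  also have "\<dots> = mult_list (G Mod Z) (map (\<lambda>k. (Z #> r k) \<otimes>\<^bsub>G Mod Z\<^esub> (Z #> s k)) [0..<n])"
    using group_hom.hom_mult[OF coset_hom rc] by (intro arg_cong[where f = "mult_list (G Mod Z)"] map_cong) auto
  also have "\<dots> = mult_list (G Mod Z) (map (\<lambda>k. Z #> r k) [0..<n]) \<otimes>\<^bsub>G Mod Z\<^esub>
      mult_list (G Mod Z) (map (\<lambda>k. Z #> s k) [0..<n])"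
  proof (rule Q.mult_list_map_mult)
    show "Z #> r k \<in> carrier (G Mod Z)" "Z #> s k \<in> carrier (G Mod Z)" if "k \<in> set [0..<n]" for k
      using group_hom.hom_closed[OF coset_hom rc(1)] group_hom.hom_closed[OF coset_hom rc(2)] that by auto
    show "(Z #> s j) \<otimes>\<^bsub>G Mod Z\<^esub> (Z #> r k) = (Z #> r k) \<otimes>\<^bsub>G Mod Z\<^esub> (Z #> s j)"
      if "j \<in> set [0..<n]" "k \<in> set [0..<n]" "j \<noteq> k" for j k
      using coset_commute_factors[of k j "r k" "s j"] r s that by auto
  qed simp
  also have "\<dots> = (Z #> mult_list G (map r [0..<n])) \<otimes>\<^bsub>G Mod Z\<^esub> (Z #> mult_list G (map s [0..<n]))"
    using coset_mult_list[of "[0..<n]"] rc by simp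
  finally show ?thesis .
qed

lemma multiply_cosets_hom: "multiply_cosets \<in> hom (product_group {..<n} factor_quotients) (G Mod Z)"
proof (rule homI)
  fix x assume x: "x \<in> carrier (product_group {..<n} factor_quotients)"
  obtain r where r: "\<And>k. k < n \<Longrightarrow> r k \<in> Gs k" "\<And>k. k < n \<Longrightarrow> x k = Z_factor k #> r k"
    using product_quotients_representatives[OF x] by blast
  have "mult_list G (map r [0..<n]) \<in> carrier G"
    by (rule mult_list_closed) (use r(1) factor_subset in fastforce)
  then show "multiply_cosets x \<in> carrier (G Mod Z)"
    using multiply_cosets_eq[OF r] unfolding carrier_FactGroup by simp
next
  fix x y assume x: "x \<in> carrier (product_group {..<n} factor_quotients)"
    and y: "y \<in> carrier (product_group {..<n} factor_quotients)"
  obtain r where r: "\<And>k. k < n \<Longrightarrow> r k \<in> Gs k" "\<And>k. k < n \<Longrightarrow> x k = Z_factor k #> r k"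
    using product_quotients_representatives[OF x] by blast
  obtain s where s: "\<And>k. k < n \<Longrightarrow> s k \<in> Gs k" "\<And>k. k < n \<Longrightarrow> y k = Z_factor k #> s k"
    using product_quotients_representatives[OF y] by blast
  have "multiply_cosets (x \<otimes>\<^bsub>product_group {..<n} factor_quotients\<^esub> y)
      = Z #> mult_list G (map (\<lambda>k. r k \<otimes> s k) [0..<n])"
  proof (rule multiply_cosets_eq)
    fix k assume k: "k < n"
    show "r k \<otimes> s k \<in> Gs k" using subgroup.m_closed[OF subgroup_factor[OF k] r(1)[OF k] s(1)[OF k]] .
    have "x k <#> y k = Z_factor k #> (r k \<otimes> s k)"
      using rcos_mult_normal_in[OF subgroup_factor[OF k] normal_in_Z_factor[OF k] r(1)[OF k] s(1)[OF k]]
      unfolding r(2)[OF k] s(2)[OF k] .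
    then show "(x \<otimes>\<^bsub>product_group {..<n} factor_quotients\<^esub> y) k = Z_factor k #> (r k \<otimes> s k)"
      using k by simp
  qed
  then show "multiply_cosets (x \<otimes>\<^bsub>product_group {..<n} factor_quotients\<^esub> y)
      = multiply_cosets x \<otimes>\<^bsub>G Mod Z\<^esub> multiply_cosets y"
    using coset_mult_list_mult[OF r(1) s(1)] multiply_cosets_eq[OF r] multiply_cosets_eq[OF s] by simp
qed

lemma multiply_cosets_onto:
  "multiply_cosets ` carrier (product_group {..<n} factor_quotients) = carrier (G Mod Z)"
proof
  show "multiply_cosets ` carrier (product_group {..<n} factor_quotients) \<subseteq> carrier (G Mod Z)"
    using multiply_cosets_hom unfolding hom_def by blast
  show "carrier (G Mod Z) \<subseteq> multiply_cosets ` carrier (product_group {..<n} factor_quotients)"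
  proof
    fix C assume "C \<in> carrier (G Mod Z)"
    then obtain g where g: "g \<in> carrier G" and C: "C = Z #> g" unfolding carrier_FactGroup by blast
    obtain r where r: "\<forall>k\<in>set [0..<n]. r k \<in> Gs k" and g_eq: "g = mult_list G (map r [0..<n])"
      using g carrier_eq mem_set_prod_list_iff[of "[0..<n]" g G Gs] by auto
    define x where "x = (\<lambda>k\<in>{..<n}. Z_factor k #> r k)"
    have "x \<in> carrier (product_group {..<n} factor_quotients)"
      unfolding carrier_product_quotients x_def using r by auto
    moreover have "multiply_cosets x = C" unfolding C g_eq using multiply_cosets_eq[of r x] r by (simp add: x_def)
    ultimately show "C \<in> multiply_cosets ` carrier (product_group {..<n} factor_quotients)" by blast
  qed
qed

lemma multiply_cosets_trivial_kernel:
  assumes x: "x \<in> carrier (product_group {..<n} factor_quotients)" and one: "multiply_cosets x = \<one>\<^bsub>G Mod Z\<^esub>"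
  shows "x = \<one>\<^bsub>product_group {..<n} factor_quotients\<^esub>"
proof -
  obtain r where r: "\<And>k. k < n \<Longrightarrow> r k \<in> Gs k" "\<And>k. k < n \<Longrightarrow> x k = Z_factor k #> r k"
    using product_quotients_representatives[OF x] by blast
  have rc: "mult_list G (map r [0..<n]) \<in> carrier G"
    by (rule mult_list_closed) (use r(1) factor_subset in fastforce)
  have "Z #> mult_list G (map r [0..<n]) = Z" using one multiply_cosets_eq[OF r] by simp
  then have prod: "mult_list G (map r [0..<n]) \<in> Z"
    using coset_join1[OF _ rc normal_in_subgroup[OF normal_in_Z]] by blast
  have "x k = Z_factor k" if k: "k < n" for k
  proof -
    have "r k \<in> Z_factor k" using factors_mem_Z[OF r(1) prod k] r(1)[OF k] Z_factor_eq[OF k] by blast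
    then show ?thesis
      using r(2)[OF k] coset_join2[OF _ normal_in_subgroup[OF normal_in_Z_factor[OF k]]] r(1)[OF k] factor_subset[OF k]
      by blast
  qed
  moreover have "x \<in> extensional {..<n}" using x unfolding carrier_product_quotients by blast
  moreover have "\<one>\<^bsub>product_group {..<n} factor_quotients\<^esub> = (\<lambda>k\<in>{..<n}. Z_factor k)" by simp
  ultimately show ?thesis by (auto intro: extensionalityI)
qed

lemma multiply_cosets_iso: "multiply_cosets \<in> iso (product_group {..<n} factor_quotients) (G Mod Z)"
proof -
  have "group_hom (product_group {..<n} factor_quotients) (G Mod Z) multiply_cosets"
    using multiply_cosets_hom group_product_quotients normal.factorgroup_is_group[OF Z_normal]
    by (simp add: group_hom_def group_hom_axioms_def)
  then show ?thesis
    using multiply_cosets_onto multiply_cosets_trivial_kernel by (simp add: group_hom.iso_iff)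
qed

theorem quotient_iso_product: "G Mod Z \<cong> product_group {..<n} factor_quotients"
  using group.iso_sym[OF group_product_quotients] multiply_cosets_iso unfolding is_iso_def by blast

end

theorem lemma2:
  fixes F :: "nat monoid \<Rightarrow> bool"
    and G :: "('a, 'b) monoid_scheme"
    and Gs :: "nat \<Rightarrow> 'a set"
    and n :: nat
  assumes "hereditary_formation F"
    and "contains_nilpotent F"
    and "group G" and "finite (carrier G)"
    and "\<forall>i<n. subgroup (Gs i) G"
    and "carrier G = set_prod_list G (map Gs [0..<n])"
    and "\<forall>i<n. \<forall>j<n. subgroup (Gs i <#>\<^bsub>G\<^esub> Gs j) G"
    and "\<forall>i<n. comm_subgroup G (Gs i) (set_prod_list G (map Gs (filter (\<lambda>j. j \<noteq> i) [0..<n])))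
                 \<subseteq> F_hypercenter F G"
  shows "G Mod (F_hypercenter F G) \<cong>
           product_group {..<n}
             (\<lambda>i. (G\<lparr>carrier := Gs i\<rparr>) Mod (F_hypercenter F (G\<lparr>carrier := Gs i\<rparr>)))"
proof -
  have "hypercentral_product G F Gs n"
    unfolding hypercentral_product_def hypercentral_product_axioms_def using assms by blast
  then show ?thesis by (rule hypercentral_product.quotient_iso_product)
qed

end
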